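(* Let $n\in\mathbb{R}^+$, $f\in D_{HK}$ and $\phi\in BV[a,b]$. Then $$\int_a^b\phi(x)\,\mathcal{J}_a^nf(x)\,dx=\int_a^b f(t)\,\mathcal{J}_{b_-}^n\phi(t)\,dt.$$
   Context: Fix real numbers $a<b$; $BV[a,b]$ is the space of functions of bounded variation on $[a,b]$. Let $C_0=\{F\in C[a,b]:F(a)=0\}$. A distribution $f$ on $(a,b)$ is Henstock–Kurzweil integrable if $f=F'$ (distributional derivative) for some (unique) $F\in C_0$; $\int_c^d f=F(d)-F(c)$, and for $g\in BV[a,b]$, $\int_a^b fg=F(b)g(b)-\int_a^bF\,dg$. $D_{HK}$ is the space of these with the Alexiewicz norm $\|f\|_A=\sup_{[a,b]}|F|$; $L^1[a,b]$ is dense in it. Left Riemann–Liouville integral: for $n\ge1$, $\mathcal{J}_a^nf(x)=\frac{1}{\Gamma(n)}\int_a^x(x-t)^{n-1}f(t)\,dt$; for $0<n<1$, $\mathcal{J}_a^nf(x)=\frac{1}{\Gamma(n)}\lim_{k}\int_a^x(x-t)^{n-1}f_k(t)\,dt$ with $(f_k)\subset L^1[a,b]$, $\|f_k-f\|_A\to0$. Right-sided Riemann–Liouville integral: for $n\ge1$, $\mathcal{J}_{b_-}^n\phi(x)=\frac{1}{\Gamma(n)}\int_x^b(t-x)^{n-1}\phi(t)\,dt$; for $0<n<1$ defined analogously by the limit over $L^1$ approximations (for $\phi\in BV[a,b]$ it is the classical Lebesgue integral). *)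

theory Defs
  imports "HOL-Analysis.Analysis"
begin

definition is_partition :: "real \<Rightarrow> real \<Rightarrow> nat \<Rightarrow> (nat \<Rightarrow> real) \<Rightarrow> bool" where
  "is_partition a b m x \<longleftrightarrow> x 0 = a \<and> x m = b \<and> (\<forall>i<m. x i \<le> x (Suc i))"

definition bounded_var :: "(real \<Rightarrow> real) \<Rightarrow> real \<Rightarrow> real \<Rightarrow> bool" where
  "bounded_var g a b \<longleftrightarrow>
     (\<exists>M. \<forall>m x. is_partition a b m x \<longrightarrow> (\<Sum>i<m. \<bar>g (x (Suc i)) - g (x i)\<bar>) \<le> M)"

definition has_RS_integral :: "(real \<Rightarrow> real) \<Rightarrow> (real \<Rightarrow> real) \<Rightarrow> real \<Rightarrow> real \<Rightarrow> real \<Rightarrow> bool" where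
  "has_RS_integral F g a b I \<longleftrightarrow>
     (\<forall>\<epsilon>>0. \<exists>\<delta>>0. \<forall>m x \<xi>.
        is_partition a b m x \<and> (\<forall>i<m. x i \<le> \<xi> i \<and> \<xi> i \<le> x (Suc i) \<and> x (Suc i) - x i < \<delta>)
        \<longrightarrow> \<bar>(\<Sum>i<m. F (\<xi> i) * (g (x (Suc i)) - g (x i))) - I\<bar> < \<epsilon>)"

definition RS_integral :: "(real \<Rightarrow> real) \<Rightarrow> (real \<Rightarrow> real) \<Rightarrow> real \<Rightarrow> real \<Rightarrow> real" where
  "RS_integral F g a b = (THE I. has_RS_integral F g a b I)"

(* A Henstock--Kurzweil integrable distribution f on (a,b) is represented by its primitive
   F \<in> C_0 (continuous on [a,b], F a = 0), f = F'.  For g \<in> BV[c,d] with c \<ge> a: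
   \<integral>_c^d f g = F(d) g(d) - F(c) g(c) - \<integral>_c^d F dg;  with c = a this is F(d) g(d) - \<integral>_a^d F dg. *)
definition hk_pair :: "(real \<Rightarrow> real) \<Rightarrow> (real \<Rightarrow> real) \<Rightarrow> real \<Rightarrow> real \<Rightarrow> real" where
  "hk_pair F g a d = F d * g d - RS_integral F g a d"

(* kernel (x - t)^(n-1), with the convention (x-t)^0 = 1 *)
definition rl_kernel :: "real \<Rightarrow> real \<Rightarrow> real" where
  "rl_kernel n y = (if n = 1 then 1 else y powr (n - 1))"

(* Left Riemann--Liouville integral, n \<ge> 1, of f = F' \<in> D_HK (pointwise function):
   J_a^n f(x) = 1/\<Gamma>(n) \<integral>_a^x (x-t)^(n-1) f(t) dt *)
definition RL_left :: "real \<Rightarrow> real \<Rightarrow> (real \<Rightarrow> real) \<Rightarrow> real \<Rightarrow> real" where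
  "RL_left a n F x = (1 / Gamma n) * hk_pair F (\<lambda>t. rl_kernel n (x - t)) a x"

definition RL_left_L1 :: "real \<Rightarrow> real \<Rightarrow> (real \<Rightarrow> real) \<Rightarrow> real \<Rightarrow> real" where
  "RL_left_L1 a n g x = (1 / Gamma n) * integral {a..x} (\<lambda>t. rl_kernel n (x - t) * g t)"

definition alex_dist_L1 :: "real \<Rightarrow> real \<Rightarrow> (real \<Rightarrow> real) \<Rightarrow> (real \<Rightarrow> real) \<Rightarrow> real" where
  "alex_dist_L1 a b g F = (SUP x\<in>{a..b}. \<bar>integral {a..x} g - F x\<bar>)"

(* For 0 < n < 1: J_a^n f is the D_HK (Alexiewicz-norm) limit of J_a^n f_k for any
   sequence f_k \<in> L^1[a,b] with \<parallel>f_k - f\<parallel>_A \<rightarrow> 0.  Being an element of D_HK it is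
   represented by its primitive P \<in> C_0 (normalised to 0 outside [a,b]). *)
definition RL_left_prim :: "real \<Rightarrow> real \<Rightarrow> real \<Rightarrow> (real \<Rightarrow> real) \<Rightarrow> real \<Rightarrow> real" where
  "RL_left_prim a b n F = (THE P. continuous_on {a..b} P \<and> P a = 0 \<and> (\<forall>x. x \<notin> {a..b} \<longrightarrow> P x = 0) \<and>
     (\<forall>fs. (\<forall>k. fs k absolutely_integrable_on {a..b}) \<and> (\<lambda>k. alex_dist_L1 a b (fs k) F) \<longlonglongrightarrow> 0
        \<longrightarrow> (\<lambda>k. alex_dist_L1 a b (RL_left_L1 a n (fs k)) P) \<longlonglongrightarrow> 0))"

definition RL_right :: "real \<Rightarrow> real \<Rightarrow> (real \<Rightarrow> real) \<Rightarrow> real \<Rightarrow> real" where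
  "RL_right b n \<phi> x = (1 / Gamma n) * integral {x..b} (\<lambda>t. rl_kernel n (t - x) * \<phi> t)"

end

theory Submission
  imports Defs
begin

text \<open>
  Approximate F uniformly on [a,b] by polynomials G_k vanishing at a, with derivatives g_k.
  For such smooth primitives, integration by parts and Fubini's theorem on the triangle
  a \<le> t \<le> x \<le> b reduce both sides to
  (1/\<Gamma>(n)) \<integral>_a^b \<phi>(x) \<integral>_a^x (x-t)^(n-1) g_k(t) dt dx,
  and it remains to let k \<rightarrow> \<infinity> on both sides. The right-hand side is a Riemann-Stieltjes
  integral of F against the right Riemann-Liouville integral of \<phi>, which is again of bounded
  variation, so it is Lipschitz in F for the sup norm. On the left, for n \<ge> 1 the integrands
  converge boundedly; for 0 < n < 1 the primitive of J_a^n F' is identified with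
  (1/\<Gamma>(n)) \<integral>_a^x (x-t)^(n-1) F(t) dt, which is again Lipschitz in F.
\<close>

definition RS_sum :: "(real \<Rightarrow> real) \<Rightarrow> (real \<Rightarrow> real) \<Rightarrow> nat \<Rightarrow> (nat \<Rightarrow> real) \<Rightarrow> (nat \<Rightarrow> real) \<Rightarrow> real" where
  "RS_sum F g m x \<xi> = (\<Sum>i<m. F (\<xi> i) * (g (x (Suc i)) - g (x i)))"

definition fine_partition :: "real \<Rightarrow> real \<Rightarrow> real \<Rightarrow> nat \<Rightarrow> (nat \<Rightarrow> real) \<Rightarrow> (nat \<Rightarrow> real) \<Rightarrow> bool" where
  "fine_partition a b \<delta> m x \<xi> \<longleftrightarrow>
     is_partition a b m x \<and> (\<forall>i<m. x i \<le> \<xi> i \<and> \<xi> i \<le> x (Suc i) \<and> x (Suc i) - x i < \<delta>)"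

lemma has_RS_integral_iff:
  "has_RS_integral F g a b I \<longleftrightarrow>
     (\<forall>\<epsilon>>0. \<exists>\<delta>>0. \<forall>m x \<xi>. fine_partition a b \<delta> m x \<xi> \<longrightarrow> \<bar>RS_sum F g m x \<xi> - I\<bar> < \<epsilon>)"
  unfolding has_RS_integral_def fine_partition_def RS_sum_def by blast

lemma is_partition_mono:
  assumes "is_partition a b m x" "i \<le> j" "j \<le> m"
  shows "x i \<le> x j"
  using assms
proof (induction j)
  case (Suc j)
  show ?case
  proof (cases "i = Suc j")
    case False
    then have "x i \<le> x j" using Suc by auto
    also have "x j \<le> x (Suc j)" using Suc.prems by (auto simp: is_partition_def)
    finally show ?thesis .
  qed simp
qed simp

lemma is_partition_bounds:
  "is_partition a b m x \<Longrightarrow> i \<le> m \<Longrightarrow> a \<le> x i \<and> x i \<le> b"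
  using is_partition_mono[of a b m x 0 i] is_partition_mono[of a b m x i m]
  by (auto simp: is_partition_def)

lemma is_partition_subinterval:
  "is_partition a b m x \<Longrightarrow> i < m \<Longrightarrow> {x i..x (Suc i)} \<subseteq> {a..b}"
  using is_partition_bounds[of a b m x i] is_partition_bounds[of a b m x "Suc i"] by auto

lemma is_partition_le: "is_partition a b m x \<Longrightarrow> a \<le> b"
  using is_partition_bounds[of a b m x 0] by (auto simp: is_partition_def)

lemma fine_partition_tag:
  "fine_partition a b \<delta> m x \<xi> \<Longrightarrow> i < m \<Longrightarrow> \<xi> i \<in> {x i..x (Suc i)}"
  by (simp add: fine_partition_def)

lemma fine_partition_mono:
  "fine_partition a b \<delta> m x \<xi> \<Longrightarrow> \<delta> \<le> \<delta>' \<Longrightarrow> fine_partition a b \<delta>' m x \<xi>"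
  by (fastforce simp: fine_partition_def)

lemma fine_partition_exists:
  assumes "a \<le> b" "\<delta> > 0"
  obtains m x \<xi> where "fine_partition a b \<delta> m x \<xi>"
proof -
  obtain n :: nat where n: "(b - a) / \<delta> < real n" using reals_Archimedean2 by blast
  define m where "m = Suc n"
  have m0: "real m > 0" by (simp add: m_def)
  have "b - a < real m * \<delta>" using n assms by (simp add: m_def field_simps)
  then have step_small: "(b - a) / real m < \<delta>" using m0 by (simp add: field_simps)
  define x where "x i = a + real i * (b - a) / real m" for i
  have step: "x (Suc i) - x i = (b - a) / real m" for i
    unfolding x_def using m0 by (simp add: divide_simps) (simp add: algebra_simps)
  have "(b - a) / real m \<ge> 0" using assms m0 by simp
  then have "x i \<le> x (Suc i)" "x (Suc i) - x i < \<delta>" for i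
    using step[of i] step_small by linarith+
  moreover have "x 0 = a" "x m = b" using m0 by (simp_all add: x_def)
  ultimately have "fine_partition a b \<delta> m x x" by (simp add: fine_partition_def is_partition_def)
  then show ?thesis by (rule that)
qed

lemma has_RS_integral_unique:
  assumes "a \<le> b" "has_RS_integral F g a b I" "has_RS_integral F g a b J"
  shows "I = J"
proof (rule ccontr)
  assume "I \<noteq> J"
  then have e: "\<bar>I - J\<bar> / 2 > 0" by simp
  obtain d1 where d1: "d1 > 0"
      "\<And>m x \<xi>. fine_partition a b d1 m x \<xi> \<Longrightarrow> \<bar>RS_sum F g m x \<xi> - I\<bar> < \<bar>I - J\<bar> / 2"
    using assms(2) e unfolding has_RS_integral_iff by blast
  obtain d2 where d2: "d2 > 0"
      "\<And>m x \<xi>. fine_partition a b d2 m x \<xi> \<Longrightarrow> \<bar>RS_sum F g m x \<xi> - J\<bar> < \<bar>I - J\<bar> / 2"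
    using assms(3) e unfolding has_RS_integral_iff by blast
  obtain m x \<xi> where f: "fine_partition a b (min d1 d2) m x \<xi>"
    using fine_partition_exists[OF assms(1), of "min d1 d2"] d1 d2 by auto
  have "\<bar>RS_sum F g m x \<xi> - I\<bar> < \<bar>I - J\<bar> / 2" "\<bar>RS_sum F g m x \<xi> - J\<bar> < \<bar>I - J\<bar> / 2"
    using d1(2) d2(2) fine_partition_mono[OF f] by auto
  then show False by (simp add: abs_if split: if_splits)
qed

lemma RS_integral_eqI: "a \<le> b \<Longrightarrow> has_RS_integral F g a b I \<Longrightarrow> RS_integral F g a b = I"
  unfolding RS_integral_def by (rule the_equality) (auto intro: has_RS_integral_unique)

lemma integral_sum_over_partition:
  fixes h :: "real \<Rightarrow> real"
  assumes "is_partition a b m x" "h integrable_on {a..b}"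
  shows "(\<Sum>i<m. integral {x i..x (Suc i)} h) = integral {a..b} h"
  using assms
proof (induction m arbitrary: b)
  case 0
  then have "a = b" by (simp add: is_partition_def)
  then show ?case by simp
next
  case (Suc m)
  have p: "is_partition a (x m) m x" using Suc.prems by (auto simp: is_partition_def)
  have le: "a \<le> x m" "x m \<le> b" using is_partition_bounds[OF Suc.prems(1), of m] by auto
  then have "h integrable_on {a..x m}" using Suc.prems(2) integrable_on_subinterval by fastforce
  then have "(\<Sum>i<m. integral {x i..x (Suc i)} h) = integral {a..x m} h" using Suc.IH[OF p] by blast
  moreover have "x (Suc m) = b" using Suc.prems(1) by (simp add: is_partition_def)
  ultimately show ?case using Henstock_Kurzweil_Integration.integral_combine[OF le Suc.prems(2)] by simp
qed

lemma sum_over_partition_telescope: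
  fixes g :: "real \<Rightarrow> real"
  shows "is_partition a b m x \<Longrightarrow> (\<Sum>i<m. g (x (Suc i)) - g (x i)) = g b - g a"
  using sum_lessThan_telescope[of "\<lambda>i. g (x i)" m] by (simp add: is_partition_def)

definition variation_sum :: "(real \<Rightarrow> real) \<Rightarrow> nat \<Rightarrow> (nat \<Rightarrow> real) \<Rightarrow> real" where
  "variation_sum g m x = (\<Sum>i<m. \<bar>g (x (Suc i)) - g (x i)\<bar>)"

definition variation_le :: "(real \<Rightarrow> real) \<Rightarrow> real \<Rightarrow> real \<Rightarrow> real \<Rightarrow> bool" where
  "variation_le g a b M \<longleftrightarrow> (\<forall>m x. is_partition a b m x \<longrightarrow> variation_sum g m x \<le> M)"

lemma bounded_var_iff_variation_le: "bounded_var g a b \<longleftrightarrow> (\<exists>M. variation_le g a b M)"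
  unfolding bounded_var_def variation_le_def variation_sum_def ..

lemma variation_sum_nonneg: "variation_sum g m x \<ge> 0"
  unfolding variation_sum_def by (rule sum_nonneg) simp

lemma is_partition_snoc:
  assumes "is_partition a c m x" "c \<le> d"
  shows "is_partition a d (Suc m) (x(Suc m := d))"
    and "variation_sum g (Suc m) (x(Suc m := d)) = variation_sum g m x + \<bar>g d - g c\<bar>"
proof -
  have xm: "x m = c" using assms(1) by (simp add: is_partition_def)
  show "is_partition a d (Suc m) (x(Suc m := d))"
    using assms unfolding is_partition_def by (auto simp: less_Suc_eq)
  have "(\<Sum>i<m. \<bar>g ((x(Suc m := d)) (Suc i)) - g ((x(Suc m := d)) i)\<bar>) = variation_sum g m x"
    unfolding variation_sum_def by (rule sum.cong) auto
  then show "variation_sum g (Suc m) (x(Suc m := d)) = variation_sum g m x + \<bar>g d - g c\<bar>"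
    unfolding variation_sum_def using xm by simp
qed

lemma is_partition_trivial: "a \<le> x \<Longrightarrow> is_partition a x 1 (\<lambda>i. if i = 0 then a else x)"
  by (simp add: is_partition_def)

lemma variation_le_nonneg: "variation_le g a b M \<Longrightarrow> a \<le> b \<Longrightarrow> M \<ge> 0"
  using is_partition_trivial[of a b] variation_sum_nonneg[of g 1 "\<lambda>i. if i = 0 then a else b"]
  unfolding variation_le_def by force

lemma variation_le_initial_segment:
  assumes "variation_le g a b M" "x \<le> b" "is_partition a x m p"
  shows "variation_sum g m p \<le> M"
proof -
  have "variation_sum g (Suc m) (p(Suc m := b)) \<le> M"
    using assms is_partition_snoc(1)[OF assms(3) assms(2)] unfolding variation_le_def by blast
  then show ?thesis using is_partition_snoc(2)[OF assms(3) assms(2), of g] by simp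
qed

lemma variation_le_bound:
  assumes "variation_le g a b M" "a \<le> x" "x \<le> b"
  shows "\<bar>g x\<bar> \<le> \<bar>g a\<bar> + M"
  using variation_le_initial_segment[OF assms(1) assms(3) is_partition_trivial[OF assms(2)]]
  by (simp add: variation_sum_def)

lemma bounded_var_bounded_image:
  assumes "bounded_var g a b"
  shows "bounded (g ` {a..b})"
proof -
  obtain M where "variation_le g a b M" using assms bounded_var_iff_variation_le by blast
  then show ?thesis unfolding bounded_iff using variation_le_bound by fastforce
qed

lemma variation_le_mono_fun:
  assumes "\<And>s t. a \<le> s \<Longrightarrow> s \<le> t \<Longrightarrow> t \<le> b \<Longrightarrow> g s \<le> g t"
  shows "variation_le g a b (g b - g a)"
  unfolding variation_le_def
proof (intro allI impI)
  fix m x assume p: "is_partition a b m x"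
  have "variation_sum g m x = (\<Sum>i<m. g (x (Suc i)) - g (x i))"
    unfolding variation_sum_def
  proof (rule sum.cong[OF refl])
    fix i assume "i \<in> {..<m}"
    then have "g (x i) \<le> g (x (Suc i))"
      using assms is_partition_bounds[OF p, of i] is_partition_bounds[OF p, of "Suc i"] p
      by (auto simp: is_partition_def)
    then show "\<bar>g (x (Suc i)) - g (x i)\<bar> = g (x (Suc i)) - g (x i)" by simp
  qed
  also have "\<dots> = g b - g a" by (rule sum_over_partition_telescope[OF p])
  finally show "variation_sum g m x \<le> g b - g a" by simp
qed

lemma variation_le_antimono_fun:
  assumes "\<And>s t. a \<le> s \<Longrightarrow> s \<le> t \<Longrightarrow> t \<le> b \<Longrightarrow> g t \<le> g s"
  shows "variation_le g a b (g a - g b)"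
proof -
  have "variation_le (\<lambda>t. - g t) a b (- g b - - g a)"
    by (rule variation_le_mono_fun) (use assms in auto)
  then show ?thesis unfolding variation_le_def variation_sum_def by (simp add: abs_minus_commute)
qed

lemma bounded_var_mono_fun:
  "(\<And>s t. a \<le> s \<Longrightarrow> s \<le> t \<Longrightarrow> t \<le> b \<Longrightarrow> g s \<le> g t) \<Longrightarrow> bounded_var g a b"
  using variation_le_mono_fun bounded_var_iff_variation_le by blast

lemma bounded_var_antimono_fun:
  "(\<And>s t. a \<le> s \<Longrightarrow> s \<le> t \<Longrightarrow> t \<le> b \<Longrightarrow> g t \<le> g s) \<Longrightarrow> bounded_var g a b"
  using variation_le_antimono_fun bounded_var_iff_variation_le by blast

lemma variation_le_lincomb:
  assumes "variation_le f a b M1" "variation_le g a b M2"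
  shows "variation_le (\<lambda>t. c1 * f t + c2 * g t) a b (\<bar>c1\<bar> * M1 + \<bar>c2\<bar> * M2)"
  unfolding variation_le_def
proof (intro allI impI)
  fix m x assume p: "is_partition a b m x"
  have "variation_sum (\<lambda>t. c1 * f t + c2 * g t) m x
      \<le> (\<Sum>i<m. \<bar>c1\<bar> * \<bar>f (x (Suc i)) - f (x i)\<bar> + \<bar>c2\<bar> * \<bar>g (x (Suc i)) - g (x i)\<bar>)"
    unfolding variation_sum_def
  proof (rule sum_mono)
    fix i
    have "c1 * f (x (Suc i)) + c2 * g (x (Suc i)) - (c1 * f (x i) + c2 * g (x i)) =
          c1 * (f (x (Suc i)) - f (x i)) + c2 * (g (x (Suc i)) - g (x i))"
      by (simp add: algebra_simps)
    then show "\<bar>c1 * f (x (Suc i)) + c2 * g (x (Suc i)) - (c1 * f (x i) + c2 * g (x i))\<bar>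
      \<le> \<bar>c1\<bar> * \<bar>f (x (Suc i)) - f (x i)\<bar> + \<bar>c2\<bar> * \<bar>g (x (Suc i)) - g (x i)\<bar>"
      by (metis abs_mult abs_triangle_ineq)
  qed
  also have "\<dots> = \<bar>c1\<bar> * variation_sum f m x + \<bar>c2\<bar> * variation_sum g m x"
    by (simp add: variation_sum_def sum.distrib sum_distrib_left)
  also have "\<dots> \<le> \<bar>c1\<bar> * M1 + \<bar>c2\<bar> * M2"
    using assms p unfolding variation_le_def by (intro add_mono mult_left_mono) auto
  finally show "variation_sum (\<lambda>t. c1 * f t + c2 * g t) m x \<le> \<bar>c1\<bar> * M1 + \<bar>c2\<bar> * M2" .
qed

lemma bounded_var_lincomb:
  "bounded_var f a b \<Longrightarrow> bounded_var g a b \<Longrightarrow> bounded_var (\<lambda>t. c1 * f t + c2 * g t) a b"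
  using variation_le_lincomb bounded_var_iff_variation_le by metis

lemma bounded_var_cong:
  assumes "bounded_var f a b" "\<And>t. t \<in> {a..b} \<Longrightarrow> f t = g t"
  shows "bounded_var g a b"
proof -
  have "variation_sum g m x = variation_sum f m x" if "is_partition a b m x" for m x
    using is_partition_bounds[OF that] assms(2) unfolding variation_sum_def by (intro sum.cong) auto
  then show ?thesis
    using assms(1) unfolding bounded_var_iff_variation_le variation_le_def by metis
qed

definition total_variation :: "(real \<Rightarrow> real) \<Rightarrow> real \<Rightarrow> real \<Rightarrow> real" where
  "total_variation g a x = Sup {variation_sum g m p | m p. is_partition a x m p}"

lemma total_variation_upper:
  assumes "variation_le g a b M" "x \<le> b" "is_partition a x m p"
  shows "variation_sum g m p \<le> total_variation g a x"
  unfolding total_variation_def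
proof (rule cSup_upper)
  show "variation_sum g m p \<in> {variation_sum g m p |m p. is_partition a x m p}" using assms(3) by blast
  show "bdd_above {variation_sum g m p |m p. is_partition a x m p}"
    unfolding bdd_above_def using variation_le_initial_segment[OF assms(1) assms(2)] by blast
qed

lemma total_variation_le:
  assumes "variation_le g a b M" "a \<le> x" "x \<le> b"
  shows "total_variation g a x \<le> M"
  unfolding total_variation_def
  by (rule cSup_least) (use is_partition_trivial[OF assms(2)] variation_le_initial_segment[OF assms(1) assms(3)] in blast)+

lemma total_variation_nonneg:
  assumes "variation_le g a b M" "a \<le> x" "x \<le> b"
  shows "total_variation g a x \<ge> 0"
  using total_variation_upper[OF assms(1) assms(3) is_partition_trivial[OF assms(2)]] variation_sum_nonneg[of g]
  by (meson order_trans)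

lemma total_variation_step:
  assumes "variation_le g a b M" "a \<le> x" "x \<le> y" "y \<le> b"
  shows "total_variation g a x + \<bar>g y - g x\<bar> \<le> total_variation g a y"
proof -
  have "total_variation g a x \<le> total_variation g a y - \<bar>g y - g x\<bar>"
    unfolding total_variation_def[of g a x]
  proof (rule cSup_least)
    show "{variation_sum g m p |m p. is_partition a x m p} \<noteq> {}"
      using is_partition_trivial[OF assms(2)] by blast
    fix z assume "z \<in> {variation_sum g m p |m p. is_partition a x m p}"
    then obtain m p where z: "z = variation_sum g m p" and p: "is_partition a x m p" by blast
    have "variation_sum g (Suc m) (p(Suc m := y)) \<le> total_variation g a y"
      by (rule total_variation_upper[OF assms(1) assms(4) is_partition_snoc(1)[OF p assms(3)]])
    then show "z \<le> total_variation g a y - \<bar>g y - g x\<bar>"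
      using is_partition_snoc(2)[OF p assms(3), of g] z by simp
  qed
  then show ?thesis by simp
qed

lemma total_variation_mono:
  assumes "variation_le g a b M" "a \<le> s" "s \<le> t" "t \<le> b"
  shows "total_variation g a s \<le> total_variation g a t"
    and "total_variation g a s - g s \<le> total_variation g a t - g t"
  using total_variation_step[OF assms] by linarith+

lemma total_variation_oscillation:
  assumes "variation_le g a b M" "a \<le> c" "c \<le> d" "d \<le> b" "s \<in> {c..d}" "t \<in> {c..d}"
  shows "\<bar>g s - g t\<bar> \<le> total_variation g a d - total_variation g a c"
proof -
  have "\<bar>g u - g v\<bar> \<le> total_variation g a d - total_variation g a c"
    if "c \<le> v" "v \<le> u" "u \<le> d" for u v
    using total_variation_step[OF assms(1), of v u] total_variation_mono(1)[OF assms(1), of c v]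
      total_variation_mono(1)[OF assms(1), of u d] that assms(2-4) by linarith
  from this[of s t] this[of t s] show ?thesis
    using assms(5,6) by (cases "t \<le> s") (auto simp: abs_minus_commute)
qed

lemma bounded_var_clamped_borel_measurable:
  assumes "bounded_var g a b" "a \<le> b"
  shows "(\<lambda>x. g (max a (min x b))) \<in> borel_measurable borel"
proof -
  obtain M where M: "variation_le g a b M" using assms(1) bounded_var_iff_variation_le by blast
  define c where "c x = max a (min x b)" for x
  have c: "a \<le> c x" "c x \<le> b" "x \<le> y \<Longrightarrow> c x \<le> c y" for x y using assms(2) by (auto simp: c_def)
  have "mono (\<lambda>x. total_variation g a (c x))"
    unfolding mono_def using total_variation_mono(1)[OF M] c by meson
  moreover have "mono (\<lambda>x. total_variation g a (c x) - g (c x))"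
    unfolding mono_def using total_variation_mono(2)[OF M] c by meson
  ultimately have "(\<lambda>x. total_variation g a (c x) - (total_variation g a (c x) - g (c x))) \<in> borel_measurable borel"
    using borel_measurable_mono by measurable
  then show ?thesis by (simp add: c_def)
qed

lemma bounded_var_measurable_on:
  assumes "bounded_var g a b" "a \<le> b"
  shows "g \<in> borel_measurable (lebesgue_on {a..b})"
proof -
  have "(\<lambda>x. g (max a (min x b))) \<in> borel_measurable (lebesgue_on {a..b})"
    using bounded_var_clamped_borel_measurable[OF assms]
    by (intro measurable_restrict_space1 measurable_completion) simp
  then show ?thesis by (rule measurable_cong[THEN iffD1, rotated]) simp
qed

lemma bounded_var_indicator_borel_measurable:
  assumes "bounded_var g a b" "a \<le> b"
  shows "(\<lambda>x. indicator {a..b} x * g x) \<in> borel_measurable borel"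
proof -
  have "(\<lambda>x. indicator {a..b} x * g (max a (min x b))) \<in> borel_measurable borel"
    using bounded_var_clamped_borel_measurable[OF assms] by measurable
  moreover have "(\<lambda>x. indicator {a..b} x * g (max a (min x b))) = (\<lambda>x. indicator {a..b} x * g x)"
    by (auto simp: indicator_def)
  ultimately show ?thesis by simp
qed

section \<open>The Riemann-Stieltjes integral\<close>

lemma integrable_mult_diff_const:
  fixes F h :: "real \<Rightarrow> real"
  assumes "h integrable_on S" "(\<lambda>t. F t * h t) integrable_on S"
  shows "(\<lambda>t. (c - F t) * h t) integrable_on S"
  using integrable_diff[OF integrable_on_mult_right[OF assms(1), of c] assms(2)]
  by (simp add: left_diff_distrib)

lemma RS_sum_indefinite_integral:
  fixes F P h :: "real \<Rightarrow> real"
  assumes p: "is_partition a b m x" and hi: "h integrable_on {a..b}"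
    and Fhi: "(\<lambda>t. F t * h t) integrable_on {a..b}"
    and Ph: "\<And>s t. a \<le> s \<Longrightarrow> s \<le> t \<Longrightarrow> t \<le> b \<Longrightarrow> P t - P s = integral {s..t} h"
  shows "RS_sum F P m x \<xi> - integral {a..b} (\<lambda>t. F t * h t)
           = (\<Sum>i<m. integral {x i..x (Suc i)} (\<lambda>t. (F (\<xi> i) - F t) * h t))"
proof -
  have "F (\<xi> i) * (P (x (Suc i)) - P (x i)) - integral {x i..x (Suc i)} (\<lambda>t. F t * h t)
          = integral {x i..x (Suc i)} (\<lambda>t. (F (\<xi> i) - F t) * h t)" if i: "i < m" for i
  proof -
    have sub: "{x i..x (Suc i)} \<subseteq> {a..b}" by (rule is_partition_subinterval[OF p i])
    have "P (x (Suc i)) - P (x i) = integral {x i..x (Suc i)} h"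
      using Ph is_partition_bounds[OF p, of i] is_partition_bounds[OF p, of "Suc i"] p i
      by (simp add: is_partition_def)
    moreover have "integral {x i..x (Suc i)} (\<lambda>t. F (\<xi> i) * h t - F t * h t)
        = F (\<xi> i) * integral {x i..x (Suc i)} h - integral {x i..x (Suc i)} (\<lambda>t. F t * h t)"
      using integrable_on_subinterval[OF hi sub] integrable_on_subinterval[OF Fhi sub]
      by (simp add: integral_diff integrable_on_mult_right)
    ultimately show ?thesis by (simp add: left_diff_distrib)
  qed
  then show ?thesis
    unfolding RS_sum_def integral_sum_over_partition[OF p Fhi, symmetric] sum_subtractf[symmetric]
    by (intro sum.cong) auto
qed

lemma integral_tag_difference_bound:
  fixes F h :: "real \<Rightarrow> real"
  assumes hi: "h absolutely_integrable_on {c..d}" and Fhi: "(\<lambda>t. F t * h t) integrable_on {c..d}"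
    and w: "\<And>t. t \<in> {c..d} \<Longrightarrow> \<bar>F s - F t\<bar> \<le> w"
  shows "\<bar>integral {c..d} (\<lambda>t. (F s - F t) * h t)\<bar> \<le> w * integral {c..d} (\<lambda>t. \<bar>h t\<bar>)"
proof -
  have "norm (integral {c..d} (\<lambda>t. (F s - F t) * h t)) \<le> integral {c..d} (\<lambda>t. w * \<bar>h t\<bar>)"
    using hi w by (intro integral_norm_bound_integral integrable_on_mult_right integrable_mult_diff_const Fhi)
      (auto simp: absolutely_integrable_on_def abs_mult intro: mult_right_mono)
  then show ?thesis by simp
qed

lemma has_RS_integral_continuous_indefinite:
  fixes F P h :: "real \<Rightarrow> real"
  assumes Fc: "continuous_on {a..b} F" and hi: "h absolutely_integrable_on {a..b}"
    and Ph: "\<And>s t. a \<le> s \<Longrightarrow> s \<le> t \<Longrightarrow> t \<le> b \<Longrightarrow> P t - P s = integral {s..t} h"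
  shows "has_RS_integral F P a b (integral {a..b} (\<lambda>t. F t * h t))"
  unfolding has_RS_integral_iff
proof (intro allI impI)
  fix \<epsilon> :: real assume e: "\<epsilon> > 0"
  define K where "K = integral {a..b} (\<lambda>t. \<bar>h t\<bar>)"
  have habs: "(\<lambda>t. \<bar>h t\<bar>) integrable_on {a..b}" and h: "h integrable_on {a..b}"
    using hi by (simp_all add: absolutely_integrable_on_def)
  have K0: "K \<ge> 0" unfolding K_def by (rule integral_nonneg[OF habs]) auto
  define \<eta> where "\<eta> = \<epsilon> / (K + 1)"
  have eta: "\<eta> > 0" "\<eta> * K < \<epsilon>" using e K0 by (simp_all add: \<eta>_def field_simps)
  obtain \<delta> where d: "\<delta> > 0"
      "\<And>s t. s \<in> {a..b} \<Longrightarrow> t \<in> {a..b} \<Longrightarrow> dist t s < \<delta> \<Longrightarrow> dist (F t) (F s) < \<eta>"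
    using compact_uniformly_continuous[OF Fc compact_Icc] eta(1) unfolding uniformly_continuous_on_def by metis
  have Fhi: "(\<lambda>t. F t * h t) integrable_on {a..b}"
    using absolutely_integrable_bounded_measurable_product_real[of F "{a..b}" h] Fc hi
      compact_imp_bounded[OF compact_continuous_image[OF Fc compact_Icc]]
    by (simp add: continuous_imp_measurable_on_sets_lebesgue set_lebesgue_integral_eq_integral(1))
  have "\<bar>RS_sum F P m x \<xi> - integral {a..b} (\<lambda>t. F t * h t)\<bar> < \<epsilon>"
    if f: "fine_partition a b \<delta> m x \<xi>" for m x \<xi>
  proof -
    have p: "is_partition a b m x" using f by (simp add: fine_partition_def)
    have piece: "\<bar>integral {x i..x (Suc i)} (\<lambda>t. (F (\<xi> i) - F t) * h t)\<bar>
                  \<le> \<eta> * integral {x i..x (Suc i)} (\<lambda>t. \<bar>h t\<bar>)" if i: "i < m" for i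
    proof (rule integral_tag_difference_bound)
      have sub: "{x i..x (Suc i)} \<subseteq> {a..b}" by (rule is_partition_subinterval[OF p i])
      show "h absolutely_integrable_on {x i..x (Suc i)}"
        "(\<lambda>t. F t * h t) integrable_on {x i..x (Suc i)}"
        using absolutely_integrable_on_subinterval[OF hi sub] integrable_on_subinterval[OF Fhi sub] .
      show "\<bar>F (\<xi> i) - F t\<bar> \<le> \<eta>" if "t \<in> {x i..x (Suc i)}" for t
        using d(2)[of t "\<xi> i"] fine_partition_tag[OF f i] that sub f i
        by (force simp: fine_partition_def dist_real_def)
    qed
    have "\<bar>RS_sum F P m x \<xi> - integral {a..b} (\<lambda>t. F t * h t)\<bar>
        = \<bar>\<Sum>i<m. integral {x i..x (Suc i)} (\<lambda>t. (F (\<xi> i) - F t) * h t)\<bar>"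
      using RS_sum_indefinite_integral[OF p h Fhi Ph] by simp
    also have "\<dots> \<le> (\<Sum>i<m. \<eta> * integral {x i..x (Suc i)} (\<lambda>t. \<bar>h t\<bar>))"
      by (rule order_trans[OF sum_abs sum_mono]) (use piece in auto)
    also have "\<dots> = \<eta> * K"
      using integral_sum_over_partition[OF p habs] by (simp add: K_def sum_distrib_left[symmetric])
    finally show ?thesis using eta by linarith
  qed
  then show "\<exists>\<delta>>0. \<forall>m x \<xi>. fine_partition a b \<delta> m x \<xi> \<longrightarrow>
               \<bar>RS_sum F P m x \<xi> - integral {a..b} (\<lambda>t. F t * h t)\<bar> < \<epsilon>"
    using d(1) by blast
qed

lemma integral_tag_difference_bounded_var:
  fixes \<phi> h :: "real \<Rightarrow> real"
  assumes M: "variation_le \<phi> a b M" and cd: "a \<le> c" "c \<le> d" "d \<le> b" and s: "s \<in> {c..d}"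
    and hi: "h absolutely_integrable_on {c..d}" and \<phi>hi: "(\<lambda>t. \<phi> t * h t) integrable_on {c..d}"
    and hb: "\<And>t. t \<in> {c..d} \<Longrightarrow> \<bar>h t\<bar> \<le> H"
  shows "\<bar>integral {c..d} (\<lambda>t. (\<phi> s - \<phi> t) * h t)\<bar>
           \<le> H * (d - c) * (total_variation \<phi> a d - total_variation \<phi> a c)"
proof -
  have "\<bar>integral {c..d} (\<lambda>t. (\<phi> s - \<phi> t) * h t)\<bar>
      \<le> (total_variation \<phi> a d - total_variation \<phi> a c) * integral {c..d} (\<lambda>t. \<bar>h t\<bar>)"
    using total_variation_oscillation[OF M cd s] by (intro integral_tag_difference_bound[OF hi \<phi>hi])
  also have "\<dots> \<le> (total_variation \<phi> a d - total_variation \<phi> a c) * (H * (d - c))"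
  proof (rule mult_left_mono)
    have "integral {c..d} (\<lambda>t. \<bar>h t\<bar>) \<le> integral {c..d} (\<lambda>t. H)"
      using hb hi by (intro integral_le) (auto simp: absolutely_integrable_on_def)
    then show "integral {c..d} (\<lambda>t. \<bar>h t\<bar>) \<le> H * (d - c)" using cd by (simp add: mult.commute)
    show "0 \<le> total_variation \<phi> a d - total_variation \<phi> a c"
      using total_variation_mono(1)[OF M cd] by simp
  qed
  finally show ?thesis by (simp add: algebra_simps)
qed

lemma has_RS_integral_bounded_var_indefinite:
  fixes \<phi> P h :: "real \<Rightarrow> real"
  assumes ab: "a \<le> b" and bv: "bounded_var \<phi> a b" and hi: "h absolutely_integrable_on {a..b}"
    and hb: "\<And>t. t \<in> {a..b} \<Longrightarrow> \<bar>h t\<bar> \<le> H"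
    and Ph: "\<And>s t. a \<le> s \<Longrightarrow> s \<le> t \<Longrightarrow> t \<le> b \<Longrightarrow> P t - P s = integral {s..t} h"
  shows "has_RS_integral \<phi> P a b (integral {a..b} (\<lambda>t. \<phi> t * h t))"
  unfolding has_RS_integral_iff
proof (intro allI impI)
  fix \<epsilon> :: real assume e: "\<epsilon> > 0"
  obtain M where M: "variation_le \<phi> a b M" using bv bounded_var_iff_variation_le by blast
  define V where "V = total_variation \<phi> a"
  have HM: "H * M \<ge> 0" using variation_le_nonneg[OF M ab] hb[of a] ab by simp
  define \<delta> where "\<delta> = \<epsilon> / (H * M + 1)"
  have d: "\<delta> > 0" "H * \<delta> * M < \<epsilon>" using e HM by (simp_all add: \<delta>_def field_simps)
  have h: "h integrable_on {a..b}" using hi by (simp add: absolutely_integrable_on_def)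
  have \<phi>hi: "(\<lambda>t. \<phi> t * h t) integrable_on {a..b}"
    using absolutely_integrable_bounded_measurable_product_real[OF bounded_var_measurable_on[OF bv ab]
        _ bounded_var_bounded_image[OF bv] hi]
    by (simp add: set_lebesgue_integral_eq_integral(1))
  have "\<bar>RS_sum \<phi> P m x \<xi> - integral {a..b} (\<lambda>t. \<phi> t * h t)\<bar> < \<epsilon>"
    if f: "fine_partition a b \<delta> m x \<xi>" for m x \<xi>
  proof -
    have p: "is_partition a b m x" using f by (simp add: fine_partition_def)
    have piece: "\<bar>integral {x i..x (Suc i)} (\<lambda>t. (\<phi> (\<xi> i) - \<phi> t) * h t)\<bar>
                  \<le> H * \<delta> * (V (x (Suc i)) - V (x i))" if i: "i < m" for i
    proof -
      have sub: "{x i..x (Suc i)} \<subseteq> {a..b}" by (rule is_partition_subinterval[OF p i])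
      have xi: "a \<le> x i" "x i \<le> x (Suc i)" "x (Suc i) \<le> b" "x (Suc i) - x i \<le> \<delta>"
        using sub f i by (auto simp: fine_partition_def is_partition_def)
      have "\<bar>integral {x i..x (Suc i)} (\<lambda>t. (\<phi> (\<xi> i) - \<phi> t) * h t)\<bar>
          \<le> H * (x (Suc i) - x i) * (V (x (Suc i)) - V (x i))"
        unfolding V_def using hb sub
        by (intro integral_tag_difference_bounded_var[OF M xi(1-3) fine_partition_tag[OF f i]]
            absolutely_integrable_on_subinterval[OF hi sub] integrable_on_subinterval[OF \<phi>hi sub]) auto
      also have "\<dots> \<le> H * \<delta> * (V (x (Suc i)) - V (x i))"
        using xi total_variation_mono(1)[OF M xi(1-3)] hb[of a] ab unfolding V_def
        by (intro mult_right_mono mult_left_mono) auto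
      finally show ?thesis .
    qed
    have "\<bar>RS_sum \<phi> P m x \<xi> - integral {a..b} (\<lambda>t. \<phi> t * h t)\<bar>
        = \<bar>\<Sum>i<m. integral {x i..x (Suc i)} (\<lambda>t. (\<phi> (\<xi> i) - \<phi> t) * h t)\<bar>"
      using RS_sum_indefinite_integral[OF p h \<phi>hi Ph] by simp
    also have "\<dots> \<le> (\<Sum>i<m. H * \<delta> * (V (x (Suc i)) - V (x i)))"
      by (rule order_trans[OF sum_abs sum_mono]) (use piece in auto)
    also have "\<dots> = H * \<delta> * (V b - V a)"
      using sum_over_partition_telescope[OF p, of V] by (simp add: sum_distrib_left[symmetric])
    also have "\<dots> \<le> H * \<delta> * M"
      using total_variation_le[OF M ab order_refl] total_variation_nonneg[OF M order_refl ab]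
        hb[of a] ab d(1) unfolding V_def by (intro mult_left_mono) auto
    finally show ?thesis using d(2) by linarith
  qed
  then show "\<exists>\<delta>>0. \<forall>m x \<xi>. fine_partition a b \<delta> m x \<xi> \<longrightarrow>
               \<bar>RS_sum \<phi> P m x \<xi> - integral {a..b} (\<lambda>t. \<phi> t * h t)\<bar> < \<epsilon>"
    using d(1) by blast
qed

lemma summation_by_parts_interleaved:
  fixes X Y :: "nat \<Rightarrow> real"
  shows "(\<Sum>j<Suc m. X j * (Y (Suc j) - Y j)) + (\<Sum>i<m. Y (Suc i) * (X (Suc i) - X i))
           = X m * Y (Suc m) - X 0 * Y 0"
  by (induction m) (simp_all add: algebra_simps)

lemma fine_partition_interleave:
  assumes f: "fine_partition a b \<delta> m x \<xi>" and "\<delta> > 0"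
  defines "y \<equiv> \<lambda>j. if j = 0 then a else if j \<le> m then \<xi> (j - 1) else b"
  shows "fine_partition a b (2 * \<delta>) (Suc m) y x"
proof -
  have x: "x 0 = a" "x m = b" "\<And>i. i < m \<Longrightarrow> x i \<le> \<xi> i \<and> \<xi> i \<le> x (Suc i) \<and> x (Suc i) - x i < \<delta>"
    using f by (auto simp: fine_partition_def is_partition_def)
  have "y j \<le> x j \<and> x j \<le> y (Suc j) \<and> y (Suc j) - y j < 2 * \<delta>" if j: "j < Suc m" for j
  proof (cases j)
    case 0
    then show ?thesis using x assms(2) x(3)[of 0] by (cases m) (auto simp: y_def, fastforce)
  next
    case (Suc k)
    then have k: "x k \<le> \<xi> k" "\<xi> k \<le> x (Suc k)" "x (Suc k) - x k < \<delta>" using j x(3)[of k] by auto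
    show ?thesis
    proof (cases "Suc k < m")
      case True
      then have "x (Suc k) \<le> \<xi> (Suc k)" "\<xi> (Suc k) \<le> x (Suc (Suc k))"
        "x (Suc (Suc k)) - x (Suc k) < \<delta>" using x(3) by auto
      then show ?thesis using k True Suc by (simp add: y_def)
    next
      case False
      then have "Suc k = m" using j Suc by simp
      then show ?thesis using k x(2) Suc assms(2) by (auto simp: y_def)
    qed
  qed
  moreover have "y 0 = a" "y (Suc m) = b" by (simp_all add: y_def)
  ultimately show ?thesis by (fastforce simp: fine_partition_def is_partition_def)
qed

lemma RS_sum_interleave_by_parts:
  assumes "is_partition a b m x"
  shows "RS_sum F g (Suc m) (\<lambda>j. if j = 0 then a else if j \<le> m then \<xi> (j - 1) else b) x
           + RS_sum g F m x \<xi> = F b * g b - F a * g a"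
proof -
  define y where "y = (\<lambda>j. if j = 0 then a else if j \<le> m then \<xi> (j - 1) else b)"
  have "RS_sum g F m x \<xi> = (\<Sum>i<m. g (y (Suc i)) * (F (x (Suc i)) - F (x i)))"
    unfolding RS_sum_def by (rule sum.cong) (auto simp: y_def)
  moreover have "x 0 = a" "x m = b" using assms by (auto simp: is_partition_def)
  ultimately show ?thesis
    using summation_by_parts_interleaved[of "\<lambda>j. F (x j)" "\<lambda>j. g (y j)" m]
    unfolding RS_sum_def y_def[symmetric] by (simp add: y_def)
qed

lemma has_RS_integral_by_parts:
  assumes "has_RS_integral F g a b I"
  shows "has_RS_integral g F a b (F b * g b - F a * g a - I)"
  unfolding has_RS_integral_iff
proof (intro allI impI)
  fix \<epsilon> :: real assume "\<epsilon> > 0"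
  then obtain \<delta> where d: "\<delta> > 0"
      "\<And>m x \<xi>. fine_partition a b \<delta> m x \<xi> \<Longrightarrow> \<bar>RS_sum F g m x \<xi> - I\<bar> < \<epsilon>"
    using assms unfolding has_RS_integral_iff by blast
  have "\<bar>RS_sum g F m x \<xi> - (F b * g b - F a * g a - I)\<bar> < \<epsilon>"
    if f: "fine_partition a b (\<delta> / 2) m x \<xi>" for m x \<xi>
    using d(2)[OF fine_partition_interleave[OF f, simplified]] d(1)
      RS_sum_interleave_by_parts[of a b m x F g \<xi>] f
    by (simp add: fine_partition_def abs_minus_commute algebra_simps)
  then show "\<exists>\<delta>>0. \<forall>m x \<xi>. fine_partition a b \<delta> m x \<xi> \<longrightarrow>
               \<bar>RS_sum g F m x \<xi> - (F b * g b - F a * g a - I)\<bar> < \<epsilon>"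
    using d(1) half_gt_zero by blast
qed

lemma RS_sum_diff: "RS_sum F g m x \<xi> - RS_sum G g m x \<xi> = RS_sum (\<lambda>t. F t - G t) g m x \<xi>"
  unfolding RS_sum_def sum_subtractf[symmetric] by (rule sum.cong) (auto simp: left_diff_distrib)

lemma RS_sum_bound:
  assumes f: "fine_partition a b \<delta> m x \<xi>" and M: "variation_le g a b M"
    and B: "\<And>t. t \<in> {a..b} \<Longrightarrow> \<bar>F t\<bar> \<le> B"
  shows "\<bar>RS_sum F g m x \<xi>\<bar> \<le> B * M"
proof -
  have p: "is_partition a b m x" using f by (simp add: fine_partition_def)
  have B0: "B \<ge> 0" using B[of a] is_partition_le[OF p] by auto
  have "\<bar>RS_sum F g m x \<xi>\<bar> \<le> (\<Sum>i<m. \<bar>F (\<xi> i) * (g (x (Suc i)) - g (x i))\<bar>)"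
    unfolding RS_sum_def by (rule sum_abs)
  also have "\<dots> \<le> (\<Sum>i<m. B * \<bar>g (x (Suc i)) - g (x i)\<bar>)"
  proof (rule sum_mono)
    fix i assume "i \<in> {..<m}"
    then have "\<xi> i \<in> {a..b}" using fine_partition_tag[OF f] is_partition_subinterval[OF p] by blast
    then show "\<bar>F (\<xi> i) * (g (x (Suc i)) - g (x i))\<bar> \<le> B * \<bar>g (x (Suc i)) - g (x i)\<bar>"
      using B by (simp add: abs_mult mult_right_mono)
  qed
  also have "\<dots> = B * variation_sum g m x" by (simp add: variation_sum_def sum_distrib_left)
  also have "\<dots> \<le> B * M" using M p B0 unfolding variation_le_def by (simp add: mult_left_mono)
  finally show ?thesis .
qed

lemma has_RS_integral_diff_bound:
  assumes ab: "a \<le> b" and I: "has_RS_integral F g a b I" and J: "has_RS_integral G g a b J"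
    and M: "variation_le g a b M" and B: "\<And>t. t \<in> {a..b} \<Longrightarrow> \<bar>F t - G t\<bar> \<le> B"
  shows "\<bar>I - J\<bar> \<le> B * M"
proof (rule field_le_epsilon)
  fix \<epsilon> :: real assume "\<epsilon> > 0"
  then have e2: "\<epsilon> / 2 > 0" by simp
  obtain d1 where d1: "d1 > 0"
      "\<And>m x \<xi>. fine_partition a b d1 m x \<xi> \<Longrightarrow> \<bar>RS_sum F g m x \<xi> - I\<bar> < \<epsilon> / 2"
    using I e2 unfolding has_RS_integral_iff by blast
  obtain d2 where d2: "d2 > 0"
      "\<And>m x \<xi>. fine_partition a b d2 m x \<xi> \<Longrightarrow> \<bar>RS_sum G g m x \<xi> - J\<bar> < \<epsilon> / 2"
    using J e2 unfolding has_RS_integral_iff by blast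
  obtain m x \<xi> where f: "fine_partition a b (min d1 d2) m x \<xi>"
    using fine_partition_exists[OF ab, of "min d1 d2"] d1 d2 by auto
  have "\<bar>RS_sum F g m x \<xi> - I\<bar> < \<epsilon> / 2" "\<bar>RS_sum G g m x \<xi> - J\<bar> < \<epsilon> / 2"
    using d1(2) d2(2) fine_partition_mono[OF f] by auto
  moreover have "\<bar>RS_sum F g m x \<xi> - RS_sum G g m x \<xi>\<bar> \<le> B * M"
    unfolding RS_sum_diff by (rule RS_sum_bound[OF f M B])
  ultimately show "\<bar>I - J\<bar> \<le> B * M + \<epsilon>" by linarith
qed

lemma has_RS_integral_approximation:
  assumes M: "variation_le g a b M"
    and J: "\<And>k. has_RS_integral (G k) g a b (J k)" and I: "J \<longlonglongrightarrow> I"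
    and err: "\<And>k t. t \<in> {a..b} \<Longrightarrow> \<bar>G k t - F t\<bar> \<le> d k" and d: "d \<longlonglongrightarrow> 0"
  shows "has_RS_integral F g a b I"
  unfolding has_RS_integral_iff
proof (intro allI impI)
  fix \<epsilon> :: real assume "\<epsilon> > 0"
  then have e3: "\<epsilon> / 3 > 0" by simp
  have "eventually (\<lambda>k. \<bar>d k * M\<bar> < \<epsilon> / 3 \<and> \<bar>J k - I\<bar> < \<epsilon> / 3) sequentially"
    using order_tendstoD(2)[OF tendsto_rabs_zero[OF tendsto_mult_left_zero[OF d, of M]] e3]
      order_tendstoD(2)[OF tendsto_rabs_zero[OF LIM_zero[OF I]] e3]
    by (auto elim: eventually_elim2)
  then obtain k where k: "\<bar>d k * M\<bar> < \<epsilon> / 3" "\<bar>J k - I\<bar> < \<epsilon> / 3"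
    using eventually_sequentially by auto
  obtain \<delta> where \<delta>: "\<delta> > 0"
      "\<And>m x \<xi>. fine_partition a b \<delta> m x \<xi> \<Longrightarrow> \<bar>RS_sum (G k) g m x \<xi> - J k\<bar> < \<epsilon> / 3"
    using J[of k] e3 unfolding has_RS_integral_iff by blast
  have "\<bar>RS_sum F g m x \<xi> - I\<bar> < \<epsilon>" if f: "fine_partition a b \<delta> m x \<xi>" for m x \<xi>
  proof -
    have "\<bar>RS_sum F g m x \<xi> - RS_sum (G k) g m x \<xi>\<bar> \<le> d k * M"
      unfolding RS_sum_diff by (rule RS_sum_bound[OF f M]) (use err in \<open>simp add: abs_minus_commute\<close>)
    then show ?thesis using \<delta>(2)[OF f] k by linarith
  qed
  then show "\<exists>\<delta>>0. \<forall>m x \<xi>. fine_partition a b \<delta> m x \<xi> \<longrightarrow> \<bar>RS_sum F g m x \<xi> - I\<bar> < \<epsilon>"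
    using \<delta>(1) by blast
qed

lemma has_RS_integral_uniform_limit:
  assumes ab: "a \<le> b" and bv: "bounded_var g a b"
    and J: "\<And>k. has_RS_integral (G k) g a b (J k)"
    and err: "\<And>k t. t \<in> {a..b} \<Longrightarrow> \<bar>G k t - F t\<bar> \<le> d k" and d: "d \<longlonglongrightarrow> 0"
  obtains I where "has_RS_integral F g a b I" "J \<longlonglongrightarrow> I"
proof -
  obtain M where M: "variation_le g a b M" using bv bounded_var_iff_variation_le by blast
  have "Cauchy J"
  proof (rule metric_CauchyI)
    fix e :: real assume "e > 0"
    then obtain N where N: "\<And>k. k \<ge> N \<Longrightarrow> \<bar>d k * M\<bar> < e / 2"
      using tendsto_mult_left_zero[OF d] unfolding LIMSEQ_iff by (metis half_gt_zero real_norm_def diff_zero)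
    have "dist (J k) (J l) < e" if "k \<ge> N" "l \<ge> N" for k l
    proof -
      have "\<bar>J k - J l\<bar> \<le> (d k + d l) * M"
      proof (rule has_RS_integral_diff_bound[OF ab J J M])
        fix t assume "t \<in> {a..b}"
        then show "\<bar>G k t - G l t\<bar> \<le> d k + d l" using err[of t k] err[of t l] by linarith
      qed
      then show ?thesis using N[OF that(1)] N[OF that(2)] by (simp add: dist_real_def algebra_simps)
    qed
    then show "\<exists>N. \<forall>k\<ge>N. \<forall>l\<ge>N. dist (J k) (J l) < e" by blast
  qed
  then obtain I where I: "J \<longlonglongrightarrow> I" using Cauchy_convergent_iff convergent_def by blast
  then show ?thesis using that has_RS_integral_approximation[OF M J I err d] by blast
qed

lemma real_polynomial_function_primitive:
  fixes p :: "real \<Rightarrow> real"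
  assumes "real_polynomial_function p"
  obtains p' where "continuous_on UNIV p'" "\<And>s t. s \<le> t \<Longrightarrow> p t - p s = integral {s..t} p'"
proof -
  obtain p' where p': "real_polynomial_function p'" "\<And>x. (p has_real_derivative p' x) (at x)"
    using has_real_derivative_polynomial_function[OF assms] by blast
  have "p t - p s = integral {s..t} p'" if "s \<le> t" for s t
  proof -
    have "(p' has_integral p t - p s) {s..t}"
      by (rule fundamental_theorem_of_calculus[OF that])
         (use p'(2) in \<open>auto simp: has_real_derivative_iff_has_vector_derivative[symmetric]
                            intro: has_field_derivative_at_within\<close>)
    then show ?thesis by (simp add: integral_unique)
  qed
  moreover have "continuous_on UNIV p'"
    using p'(1) continuous_on_polymonial_function real_polynomial_function_eq by blast
  ultimately show ?thesis using that by blast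
qed

lemma polynomial_approximations:
  fixes F :: "real \<Rightarrow> real"
  assumes "continuous_on {a..b} F"
  obtains p where "\<And>k. real_polynomial_function (p k)"
    "\<And>k t. t \<in> {a..b} \<Longrightarrow> \<bar>p k t - F t\<bar> \<le> inverse (real (Suc k))"
proof -
  have "\<forall>k. \<exists>q. real_polynomial_function q \<and> (\<forall>t\<in>{a..b}. \<bar>q t - F t\<bar> \<le> inverse (real (Suc k)))"
  proof
    fix k
    obtain q where "real_polynomial_function q" "\<And>t. t \<in> {a..b} \<Longrightarrow> \<bar>F t - q t\<bar> < inverse (real (Suc k))"
      by (rule Stone_Weierstrass_real_polynomial_function[of "{a..b}" F]) (use assms in auto)
    then show "\<exists>q. real_polynomial_function q \<and> (\<forall>t\<in>{a..b}. \<bar>q t - F t\<bar> \<le> inverse (real (Suc k)))"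
      by (metis abs_minus_commute less_imp_le)
  qed
  then obtain p where "\<forall>k. real_polynomial_function (p k) \<and>
      (\<forall>t\<in>{a..b}. \<bar>p k t - F t\<bar> \<le> inverse (real (Suc k)))"
    by metis
  then show ?thesis using that by blast
qed

lemma has_RS_integral_polynomial:
  fixes p :: "real \<Rightarrow> real"
  assumes ab: "a \<le> b" and p: "real_polynomial_function p" and bv: "bounded_var g a b"
  shows "\<exists>I. has_RS_integral p g a b I"
proof -
  obtain p' where p': "continuous_on UNIV p'" "\<And>s t. s \<le> t \<Longrightarrow> p t - p s = integral {s..t} p'"
    using real_polynomial_function_primitive[OF p] by metis
  have pc: "continuous_on {a..b} p'" using p'(1) continuous_on_subset by blast
  obtain H where H: "\<And>t. t \<in> {a..b} \<Longrightarrow> \<bar>p' t\<bar> \<le> H"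
    using compact_imp_bounded[OF compact_continuous_image[OF pc compact_Icc]]
    unfolding bounded_iff by fastforce
  have "has_RS_integral g p a b (integral {a..b} (\<lambda>t. g t * p' t))"
    by (rule has_RS_integral_bounded_var_indefinite[OF ab bv absolutely_integrable_continuous_real[OF pc] H p'(2)])
  from has_RS_integral_by_parts[OF this] show ?thesis by blast
qed

lemma RS_integrable_continuous:
  assumes ab: "a \<le> b" and Fc: "continuous_on {a..b} F" and bv: "bounded_var g a b"
  shows "\<exists>I. has_RS_integral F g a b I"
proof -
  obtain p where p: "\<And>k. real_polynomial_function (p k)"
      "\<And>k t. t \<in> {a..b} \<Longrightarrow> \<bar>p k t - F t\<bar> \<le> inverse (real (Suc k))"
    using polynomial_approximations[OF Fc] by metis
  have "\<forall>k. \<exists>I. has_RS_integral (p k) g a b I" using has_RS_integral_polynomial[OF ab p(1) bv] by blast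
  then obtain J where "\<And>k. has_RS_integral (p k) g a b (J k)" by metis
  from has_RS_integral_uniform_limit[OF ab bv this p(2) LIMSEQ_inverse_real_of_nat] show ?thesis
    by blast
qed

lemma hk_pair_tendsto:
  assumes ab: "a \<le> b" and Gc: "\<And>k. continuous_on {a..b} (G k)" and bv: "bounded_var g a b"
    and err: "\<And>k t. t \<in> {a..b} \<Longrightarrow> \<bar>G k t - F t\<bar> \<le> d k" and d: "d \<longlonglongrightarrow> 0"
  shows "(\<lambda>k. hk_pair (G k) g a b) \<longlonglongrightarrow> hk_pair F g a b"
proof -
  have "has_RS_integral (G k) g a b (RS_integral (G k) g a b)" for k
    using RS_integrable_continuous[OF ab Gc bv] RS_integral_eqI[OF ab] by blast
  then obtain I where I: "has_RS_integral F g a b I" "(\<lambda>k. RS_integral (G k) g a b) \<longlonglongrightarrow> I"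
    using has_RS_integral_uniform_limit[of a b g G "\<lambda>k. RS_integral (G k) g a b" F d] ab bv err d
    by blast
  have "(\<lambda>k. G k b - F b) \<longlonglongrightarrow> 0"
    by (rule Lim_null_comparison[OF _ d]) (use err ab in simp)
  then have "(\<lambda>k. G k b) \<longlonglongrightarrow> F b" by (rule LIM_zero_cancel)
  then show ?thesis
    unfolding hk_pair_def RS_integral_eqI[OF ab I(1)] by (intro tendsto_intros I(2))
qed

lemma smooth_approximations:
  fixes F :: "real \<Rightarrow> real"
  assumes Fc: "continuous_on {a..b} F" and F0: "F a = 0" and ab: "a \<le> b"
  obtains G g where "\<And>k. G k a = 0" "\<And>k. continuous_on UNIV (g k)"
    "\<And>k s t. s \<le> t \<Longrightarrow> G k t - G k s = integral {s..t} (g k)"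
    "\<And>k t. t \<in> {a..b} \<Longrightarrow> \<bar>G k t - F t\<bar> \<le> 2 * inverse (real (Suc k))"
proof -
  obtain p where p: "\<And>k. real_polynomial_function (p k)"
      "\<And>k t. t \<in> {a..b} \<Longrightarrow> \<bar>p k t - F t\<bar> \<le> inverse (real (Suc k))"
    using polynomial_approximations[OF Fc] by metis
  define G where "G k t = p k t - p k a" for k t
  have "\<forall>k. \<exists>g. continuous_on UNIV g \<and> (\<forall>s t. s \<le> t \<longrightarrow> G k t - G k s = integral {s..t} g)"
  proof
    fix k
    obtain g where "continuous_on UNIV g" "\<And>s t. s \<le> t \<Longrightarrow> p k t - p k s = integral {s..t} g"
      using real_polynomial_function_primitive[OF p(1)] by metis
    then show "\<exists>g. continuous_on UNIV g \<and> (\<forall>s t. s \<le> t \<longrightarrow> G k t - G k s = integral {s..t} g)"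
      by (auto simp: G_def)
  qed
  then obtain g where g: "\<And>k. continuous_on UNIV (g k)"
      "\<And>k s t. s \<le> t \<Longrightarrow> G k t - G k s = integral {s..t} (g k)"
    by metis
  have "\<bar>G k t - F t\<bar> \<le> 2 * inverse (real (Suc k))" if "t \<in> {a..b}" for k t
    using p(2)[OF that, of k] p(2)[of a k] ab F0 unfolding G_def by auto
  moreover have "G k a = 0" for k by (simp add: G_def)
  ultimately show ?thesis using that g by blast
qed

section \<open>Power kernels and Fubini on the triangle\<close>

lemma has_integral_powr_minus_lower:
  fixes c d e :: real
  assumes "c \<le> d" "e > -1"
  shows "((\<lambda>x. (x - c) powr e) has_integral (d - c) powr (e + 1) / (e + 1)) {c..d}"
  using has_integral_shift_real_ivl[OF has_integral_powr_from_0[OF assms(2), of "d - c"], of "- c"] assms(1)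
  by simp

lemma has_integral_powr_upper_minus:
  fixes c d e :: real
  assumes "c \<le> d" "e > -1"
  shows "((\<lambda>x. (d - x) powr e) has_integral (d - c) powr (e + 1) / (e + 1)) {c..d}"
proof -
  have "((\<lambda>x. (x + d) powr e) has_integral (d - c) powr (e + 1) / (e + 1)) {- d..- c}"
    using has_integral_powr_minus_lower[of "- d" "- c" e] assms by simp
  then show ?thesis using has_integral_reflect_real[where f="\<lambda>x. (x + d) powr e" and a="- d" and b="- c"] by simp
qed

lemma absolutely_integrable_powr_minus_lower:
  fixes c d e :: real
  assumes "c \<le> d" "e > -1"
  shows "(\<lambda>x. (x - c) powr e) absolutely_integrable_on {c..d}"
  using has_integral_powr_minus_lower[OF assms] by (intro nonnegative_absolutely_integrable_1) auto

lemma absolutely_integrable_powr_upper_minus: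
  fixes c d e :: real
  assumes "c \<le> d" "e > -1"
  shows "(\<lambda>x. (d - x) powr e) absolutely_integrable_on {c..d}"
  using has_integral_powr_upper_minus[OF assms] by (intro nonnegative_absolutely_integrable_1) auto

lemma absolutely_integrable_imp_integrable_lborel:
  fixes f :: "real \<Rightarrow> real"
  assumes "f absolutely_integrable_on S" "(\<lambda>x. indicator S x * f x) \<in> borel_measurable borel"
  shows "integrable lborel (\<lambda>x. indicator S x * f x)"
proof -
  have "integrable lebesgue (\<lambda>x. indicator S x * f x)"
    using assms(1) unfolding set_integrable_def by simp
  moreover have "(\<lambda>x. indicator S x * f x) \<in> borel_measurable lborel" using assms(2) by simp
  ultimately show ?thesis using integrable_completion by blast
qed

lemma integrable_lborel_has_integral:
  fixes f :: "real \<Rightarrow> real"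
  assumes "integrable lborel (\<lambda>x. indicator S x * f x)"
  shows "(f has_integral (LBINT x. indicator S x * f x)) S"
proof -
  have "set_integrable lborel S f" unfolding set_integrable_def using assms by simp
  from set_borel_integral_eq_integral[OF this] show ?thesis
    by (simp add: set_lebesgue_integral_def has_integral_iff)
qed

lemma borel_measurable_lebesgue_on_subset:
  fixes u :: "real \<Rightarrow> real"
  assumes "(\<lambda>x. indicator S x * u x) \<in> borel_measurable borel" "T \<subseteq> S"
  shows "u \<in> borel_measurable (lebesgue_on T)"
proof -
  have "(\<lambda>x. indicator S x * u x) \<in> borel_measurable (lebesgue_on T)"
    using assms(1) by (intro measurable_restrict_space1 measurable_completion) simp
  then show ?thesis
    by (rule measurable_cong[THEN iffD1, rotated]) (use assms(2) in \<open>auto simp: indicator_def\<close>)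
qed

lemma continuous_on_indicator_borel_measurable:
  fixes g :: "real \<Rightarrow> real"
  shows "continuous_on {a..b} g \<Longrightarrow> (\<lambda>t. indicator {a..b} t * g t) \<in> borel_measurable borel"
  using borel_measurable_continuous_on_indicator[of "{a..b}" g] by simp

definition triangle_integrand ::
    "real \<Rightarrow> real \<Rightarrow> real \<Rightarrow> (real \<Rightarrow> real) \<Rightarrow> (real \<Rightarrow> real) \<Rightarrow> real \<Rightarrow> real \<Rightarrow> real" where
  "triangle_integrand a b e u v x t =
     indicator {a..b} x * u x * (indicator {a..b} t * v t) * (if t \<le> x then (x - t) powr e else 0)"

lemma triangle_integrand_borel_measurable:
  assumes um: "(\<lambda>x. indicator {a..b} x * u x) \<in> borel_measurable borel"
    and vm: "(\<lambda>x. indicator {a..b} x * v x) \<in> borel_measurable borel"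
  shows "(\<lambda>(x, t). triangle_integrand a b e u v x t) \<in> borel_measurable (lborel \<Otimes>\<^sub>M lborel)"
proof -
  have [measurable]: "(\<lambda>p. indicator {a..b} (fst p) * u (fst p)) \<in> borel_measurable (lborel \<Otimes>\<^sub>M lborel)"
    by (rule measurable_compose[OF measurable_fst]) (simp add: um measurable_lborel1)
  have [measurable]: "(\<lambda>p. indicator {a..b} (snd p) * v (snd p)) \<in> borel_measurable (lborel \<Otimes>\<^sub>M lborel)"
    by (rule measurable_compose[OF measurable_snd]) (simp add: vm measurable_lborel1)
  show ?thesis unfolding triangle_integrand_def case_prod_beta' by measurable
qed

lemma triangle_integrand_inner_bound:
  assumes ab: "a \<le> b" and e: "e > -1" and ub: "\<And>x. x \<in> {a..b} \<Longrightarrow> \<bar>u x\<bar> \<le> B"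
  shows "(\<integral>\<^sup>+ x. ennreal (norm (triangle_integrand a b e u v x t)) \<partial>lborel)
           \<le> ennreal (B * ((b - a) powr (e + 1) / (e + 1))) * ennreal (norm (indicator {a..b} t * v t))"
proof (cases "t \<in> {a..b}")
  case False
  then show ?thesis by (simp add: triangle_integrand_def)
next
  case True
  have B0: "B \<ge> 0" using ub[of a] ab by auto
  define w where "w = B * \<bar>v t\<bar>"
  have w0: "w \<ge> 0" using B0 by (simp add: w_def)
  have "norm (triangle_integrand a b e u v x t) \<le> w * (indicator {t..b} x * (x - t) powr e)" for x
  proof (cases "x \<in> {a..b} \<and> t \<le> x")
    case True
    then have "norm (triangle_integrand a b e u v x t) = \<bar>u x\<bar> * \<bar>v t\<bar> * (x - t) powr e"
      using \<open>t \<in> {a..b}\<close> by (simp add: triangle_integrand_def abs_mult)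
    also have "\<dots> \<le> w * (x - t) powr e" unfolding w_def using ub True by (intro mult_right_mono) auto
    finally show ?thesis using True by simp
  qed (use w0 in \<open>auto simp: triangle_integrand_def\<close>)
  then have "(\<integral>\<^sup>+ x. ennreal (norm (triangle_integrand a b e u v x t)) \<partial>lborel)
      \<le> (\<integral>\<^sup>+ x. ennreal w * ennreal (indicator {t..b} x * (x - t) powr e) \<partial>lborel)"
    by (intro nn_integral_mono) (simp add: ennreal_mult'[symmetric] w0 ennreal_leI)
  also have "\<dots> = ennreal w * (\<integral>\<^sup>+ x. ennreal (indicator {t..b} x * (x - t) powr e) \<partial>lborel)"
    by (rule nn_integral_cmult) measurable
  also have "(\<integral>\<^sup>+ x. ennreal (indicator {t..b} x * (x - t) powr e) \<partial>lborel) = ennreal ((b - t) powr (e + 1) / (e + 1))"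
    using True e by (intro nn_integral_has_integral_lebesgue has_integral_powr_minus_lower) auto
  also have "ennreal w * \<dots> \<le> ennreal w * ennreal ((b - a) powr (e + 1) / (e + 1))"
    using True e by (intro mult_left_mono ennreal_leI divide_right_mono powr_mono2) auto
  finally show ?thesis
    using True e B0 by (simp add: w_def ennreal_mult'[symmetric] mult_ac)
qed

lemma triangle_integrand_integrable:
  assumes ab: "a \<le> b" and e: "e > -1"
    and um: "(\<lambda>x. indicator {a..b} x * u x) \<in> borel_measurable borel"
    and ub: "\<And>x. x \<in> {a..b} \<Longrightarrow> \<bar>u x\<bar> \<le> B"
    and vm: "(\<lambda>x. indicator {a..b} x * v x) \<in> borel_measurable borel"
    and vi: "v absolutely_integrable_on {a..b}"
  shows "integrable (lborel \<Otimes>\<^sub>M lborel) (\<lambda>(x, t). triangle_integrand a b e u v x t)"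
proof (rule integrableI_bounded[OF triangle_integrand_borel_measurable[OF um vm]])
  define C where "C = B * ((b - a) powr (e + 1) / (e + 1))"
  have [measurable]: "(\<lambda>t. norm (indicator {a..b} t * v t)) \<in> borel_measurable borel"
    using measurable_compose[OF vm borel_measurable_norm] by simp
  have "(\<integral>\<^sup>+ p. ennreal (norm ((\<lambda>(x, t). triangle_integrand a b e u v x t) p)) \<partial>(lborel \<Otimes>\<^sub>M lborel))
      = (\<integral>\<^sup>+ t. \<integral>\<^sup>+ x. ennreal (norm (triangle_integrand a b e u v x t)) \<partial>lborel \<partial>lborel)"
    using lborel_pair.nn_integral_snd[of "\<lambda>p. ennreal (norm ((\<lambda>(x, t). triangle_integrand a b e u v x t) p))"]
      triangle_integrand_borel_measurable[OF um vm] by (simp add: measurable_compose[OF _ borel_measurable_norm])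
  also have "\<dots> \<le> (\<integral>\<^sup>+ t. ennreal C * ennreal (norm (indicator {a..b} t * v t)) \<partial>lborel)"
    unfolding C_def by (intro nn_integral_mono triangle_integrand_inner_bound[OF ab e ub])
  also have "\<dots> = ennreal C * (\<integral>\<^sup>+ t. ennreal (norm (indicator {a..b} t * v t)) \<partial>lborel)"
    by (intro nn_integral_cmult) measurable
  also have "\<dots> < \<infinity>"
    using absolutely_integrable_imp_integrable_lborel[OF vi vm]
    unfolding integrable_iff_bounded by (simp add: ennreal_mult_less_top)
  finally show "(\<integral>\<^sup>+ p. ennreal (norm ((\<lambda>(x, t). triangle_integrand a b e u v x t) p)) \<partial>(lborel \<Otimes>\<^sub>M lborel)) < \<infinity>" .
qed

lemma absolutely_integrable_mult_bounded_measurable: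
  fixes u :: "real \<Rightarrow> real"
  assumes um: "u \<in> borel_measurable (lebesgue_on {c..d})" and ub: "\<And>x. x \<in> {c..d} \<Longrightarrow> \<bar>u x\<bar> \<le> B"
    and k: "k absolutely_integrable_on {c..d}"
  shows "(\<lambda>x. k x * u x) absolutely_integrable_on {c..d}"
proof -
  have "bounded (u ` {c..d})" unfolding bounded_iff using ub by (intro exI[of _ B]) auto
  from absolutely_integrable_bounded_measurable_product_real[OF um _ this k] show ?thesis
    by (simp add: mult.commute)
qed

lemma triangle_integrand_integral_fst:
  assumes e: "e > -1" and um: "(\<lambda>x. indicator {a..b} x * u x) \<in> borel_measurable borel"
    and ub: "\<And>x. x \<in> {a..b} \<Longrightarrow> \<bar>u x\<bar> \<le> B"
  shows "(LBINT x. triangle_integrand a b e u v x t)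
           = indicator {a..b} t * (v t * integral {t..b} (\<lambda>x. (x - t) powr e * u x))"
proof (cases "t \<in> {a..b}")
  case False
  then show ?thesis by (simp add: triangle_integrand_def)
next
  case True
  define g where "g x = (x - t) powr e * u x" for x
  have eq: "triangle_integrand a b e u v x t = v t * (indicator {t..b} x * g x)" for x
    using True by (auto simp: triangle_integrand_def g_def indicator_def)
  have "g absolutely_integrable_on {t..b}"
    unfolding g_def using True
    by (intro absolutely_integrable_mult_bounded_measurable[OF borel_measurable_lebesgue_on_subset[OF um]]
        absolutely_integrable_powr_minus_lower e) (auto intro: ub)
  moreover have "(\<lambda>x. indicator {t..b} x * g x) \<in> borel_measurable borel"
  proof -
    have "(\<lambda>x. indicator {t..b} x * ((x - t) powr e * (indicator {a..b} x * u x))) \<in> borel_measurable borel"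
      using um by measurable
    moreover have "(\<lambda>x. indicator {t..b} x * ((x - t) powr e * (indicator {a..b} x * u x)))
                     = (\<lambda>x. indicator {t..b} x * g x)"
      using True by (auto simp: g_def indicator_def)
    ultimately show ?thesis by simp
  qed
  ultimately have "integrable lborel (\<lambda>x. indicator {t..b} x * g x)"
    by (rule absolutely_integrable_imp_integrable_lborel)
  then have "(LBINT x. indicator {t..b} x * g x) = integral {t..b} g"
    using integral_unique[OF integrable_lborel_has_integral] by simp
  then show ?thesis using True by (simp add: eq g_def[abs_def])
qed

lemma triangle_integrand_integral_snd:
  assumes "integrable lborel (\<lambda>t. triangle_integrand a b e u v x t)"
  shows "(LBINT t. triangle_integrand a b e u v x t)
           = indicator {a..b} x * (u x * integral {a..x} (\<lambda>t. (x - t) powr e * v t))"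
proof (cases "x \<in> {a..b} \<and> u x \<noteq> 0")
  case False
  then show ?thesis by (auto simp: triangle_integrand_def)
next
  case True
  define h where "h t = (x - t) powr e * v t" for t
  have eq: "triangle_integrand a b e u v x t = u x * (indicator {a..x} t * h t)" for t
    using True by (auto simp: triangle_integrand_def h_def indicator_def)
  have "integrable lborel (\<lambda>t. indicator {a..x} t * h t)"
    using assms True unfolding eq by simp
  then have "(LBINT t. indicator {a..x} t * h t) = integral {a..x} h"
    using integral_unique[OF integrable_lborel_has_integral] by simp
  then show ?thesis using True by (simp add: eq h_def[abs_def])
qed

lemma has_integral_triangle_swap:
  fixes u v :: "real \<Rightarrow> real"
  assumes ab: "a \<le> b" and e: "e > -1"
    and um: "(\<lambda>x. indicator {a..b} x * u x) \<in> borel_measurable borel"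
    and ub: "\<And>x. x \<in> {a..b} \<Longrightarrow> \<bar>u x\<bar> \<le> B"
    and vm: "(\<lambda>x. indicator {a..b} x * v x) \<in> borel_measurable borel"
    and vi: "v absolutely_integrable_on {a..b}"
  shows "((\<lambda>x. u x * integral {a..x} (\<lambda>t. (x - t) powr e * v t)) has_integral
           integral {a..b} (\<lambda>t. v t * integral {t..b} (\<lambda>x. (x - t) powr e * u x))) {a..b}"
    and "(\<lambda>t. v t * integral {t..b} (\<lambda>x. (x - t) powr e * u x)) integrable_on {a..b}"
proof -
  define f where "f x t = triangle_integrand a b e u v x t" for x t
  define G where "G t = v t * integral {t..b} (\<lambda>x. (x - t) powr e * u x)" for t
  define W where "W x = u x * integral {a..x} (\<lambda>t. (x - t) powr e * v t)" for x
  have fi: "integrable (lborel \<Otimes>\<^sub>M lborel) (\<lambda>(x, t). f x t)"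
    unfolding f_def by (rule triangle_integrand_integrable[OF ab e um ub vm vi])
  have inner_x: "(LBINT x. f x t) = indicator {a..b} t * G t" for t
    unfolding f_def G_def by (rule triangle_integrand_integral_fst[OF e um ub])
  have "integrable lborel (\<lambda>t. indicator {a..b} t * G t)"
    using lborel_pair.integrable_snd[OF fi] unfolding inner_x .
  then have G: "(G has_integral (LBINT t. indicator {a..b} t * G t)) {a..b}"
    by (rule integrable_lborel_has_integral)
  then show "G integrable_on {a..b}" unfolding G_def by blast
  obtain N where N: "N \<in> null_sets lborel" "\<And>x. x \<notin> N \<Longrightarrow> integrable lborel (f x)"
    using AE_E3[OF lborel_pair.AE_integrable_fst[OF fi]] by auto
  have negN: "negligible N" using N(1) negligible_iff_null_sets null_sets_completionI by blast
  have "((\<lambda>x. LBINT t. f x t) has_integral (LBINT x. LBINT t. f x t)) UNIV"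
    by (rule has_integral_integral_lborel[OF lborel_pair.integrable_fst[OF fi]])
  then have "((\<lambda>x. if x \<in> {a..b} then W x else 0) has_integral (LBINT x. LBINT t. f x t)) UNIV"
  proof (rule has_integral_spike[OF negN, rotated])
    fix x assume "x \<in> UNIV - N"
    then show "(if x \<in> {a..b} then W x else 0) = (LBINT t. f x t)"
      using triangle_integrand_integral_snd[OF N(2)[unfolded f_def]] by (simp add: f_def W_def indicator_def)
  qed
  then have "(W has_integral (LBINT x. LBINT t. f x t)) {a..b}"
    by (simp only: has_integral_restrict_UNIV)
  moreover have "(LBINT x. LBINT t. f x t) = (LBINT t. LBINT x. f x t)"
    using lborel_pair.Fubini_integral[OF fi] by simp
  moreover have "(LBINT t. LBINT x. f x t) = integral {a..b} G"
    unfolding inner_x using integral_unique[OF G] by simp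
  ultimately show "(W has_integral integral {a..b} G) {a..b}" by simp
qed

section \<open>The right Riemann-Liouville integral of a function of bounded variation\<close>

lemma absolutely_integrable_powr_mult_bounded_var:
  fixes U :: "real \<Rightarrow> real"
  assumes "a \<le> x" "x \<le> b" "e > -1" "bounded_var U a b"
  shows "(\<lambda>t. (t - x) powr e * U t) absolutely_integrable_on {x..b}"
proof -
  obtain M where M: "variation_le U a b M" using assms(4) bounded_var_iff_variation_le by blast
  show ?thesis
  proof (rule absolutely_integrable_mult_bounded_measurable)
    show "U \<in> borel_measurable (lebesgue_on {x..b})"
      by (rule borel_measurable_lebesgue_on_subset[OF bounded_var_indicator_borel_measurable[OF assms(4)]])
         (use assms in auto)
    show "\<bar>U t\<bar> \<le> \<bar>U a\<bar> + M" if "t \<in> {x..b}" for t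
      using variation_le_bound[OF M] that assms by auto
  qed (use assms absolutely_integrable_powr_minus_lower in auto)
qed

lemma integral_powr_minus_lower_antimono:
  fixes D :: "real \<Rightarrow> real"
  assumes e: "e > -1" and xy: "a \<le> x" "x \<le> y" "y \<le> b"
    and D0: "\<And>t. a \<le> t \<Longrightarrow> t \<le> b \<Longrightarrow> D t \<ge> 0"
    and D_antimono: "\<And>s t. a \<le> s \<Longrightarrow> s \<le> t \<Longrightarrow> t \<le> b \<Longrightarrow> D t \<le> D s"
    and Dint: "\<And>z. a \<le> z \<Longrightarrow> z \<le> b \<Longrightarrow> (\<lambda>t. (t - z) powr e * D t) integrable_on {z..b}"
  shows "integral {y..b} (\<lambda>t. (t - y) powr e * D t) \<le> integral {x..b} (\<lambda>t. (t - x) powr e * D t)"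
proof -
  \<comment> \<open>Substituting t = s + z makes both integrals share the kernel s powr e.\<close>
  have shift: "((\<lambda>s. s powr e * D (s + z)) has_integral integral {z..b} (\<lambda>t. (t - z) powr e * D t)) {0..b - z}"
    if "a \<le> z" "z \<le> b" for z
    using has_integral_shift_real_ivl[OF integrable_integral[OF Dint[OF that]], of z] by simp
  have xb: "x \<le> b" using xy by linarith
  have ix: "(\<lambda>s. s powr e * D (s + x)) integrable_on {0..b - x}" using shift[OF xy(1) xb] by blast
  have "integral {y..b} (\<lambda>t. (t - y) powr e * D t) = integral {0..b - y} (\<lambda>s. s powr e * D (s + y))"
    using shift[of y] xy by (simp add: integral_unique)
  also have "\<dots> \<le> integral {0..b - y} (\<lambda>s. s powr e * D (s + x))"
    using shift[of y] xy integrable_on_subinterval[OF ix, of 0 "b - y"] D_antimono[of "_ + x" "_ + y"]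
    by (intro integral_le mult_left_mono) (auto simp: has_integral_integrable_integral)
  also have "\<dots> \<le> integral {0..b - y} (\<lambda>s. s powr e * D (s + x)) + integral {b - y..b - x} (\<lambda>s. s powr e * D (s + x))"
    using xy D0 integrable_on_subinterval[OF ix, of "b - y" "b - x"] by (auto intro!: integral_nonneg)
  also have "\<dots> = integral {0..b - x} (\<lambda>s. s powr e * D (s + x))"
    using xy by (intro Henstock_Kurzweil_Integration.integral_combine ix) auto
  also have "\<dots> = integral {x..b} (\<lambda>t. (t - x) powr e * D t)"
    using shift[of x] xy by (simp add: integral_unique)
  finally show ?thesis .
qed

lemma bounded_var_integral_powr_mono:
  fixes U :: "real \<Rightarrow> real"
  assumes ab: "a \<le> b" and e: "e > -1"
    and U_mono: "\<And>s t. a \<le> s \<Longrightarrow> s \<le> t \<Longrightarrow> t \<le> b \<Longrightarrow> U s \<le> U t"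
  shows "bounded_var (\<lambda>x. integral {x..b} (\<lambda>t. (t - x) powr e * U t)) a b"
proof -
  define D where "D t = U b - U t" for t
  define R where "R x = integral {x..b} (\<lambda>t. (t - x) powr e * D t)" for x
  have bvU: "bounded_var U a b" using bounded_var_mono_fun U_mono by blast
  have bvD: "bounded_var D a b" unfolding D_def by (rule bounded_var_antimono_fun) (use U_mono in auto)
  have Dint: "(\<lambda>t. (t - x) powr e * D t) integrable_on {x..b}" if "a \<le> x" "x \<le> b" for x
    using absolutely_integrable_powr_mult_bounded_var[OF that e bvD] set_lebesgue_integral_eq_integral(1) by blast
  have "bounded_var R a b"
  proof (rule bounded_var_antimono_fun)
    fix x y assume "a \<le> x" "x \<le> y" "y \<le> b"
    then show "R y \<le> R x"
      unfolding R_def using U_mono Dint by (intro integral_powr_minus_lower_antimono[OF e]) (auto simp: D_def)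
  qed
  moreover have "bounded_var (\<lambda>x. (b - x) powr (e + 1) / (e + 1)) a b"
    using e by (intro bounded_var_antimono_fun divide_right_mono powr_mono2) auto
  ultimately have "bounded_var (\<lambda>x. U b * ((b - x) powr (e + 1) / (e + 1)) + (- 1) * R x) a b"
    by (rule bounded_var_lincomb[rotated])
  then show ?thesis
  proof (rule bounded_var_cong)
    fix x assume x: "x \<in> {a..b}"
    have k: "((\<lambda>t. U b * (t - x) powr e) has_integral U b * ((b - x) powr (e + 1) / (e + 1))) {x..b}"
      using has_integral_mult_right[OF has_integral_powr_minus_lower[of x b e]] x e by simp
    have "integral {x..b} (\<lambda>t. U b * (t - x) powr e - (t - x) powr e * D t)
            = U b * ((b - x) powr (e + 1) / (e + 1)) - R x"
      unfolding R_def using integral_unique[OF k] Dint[of x] k x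
      by (subst integral_diff) auto
    then show "U b * ((b - x) powr (e + 1) / (e + 1)) + - 1 * R x = integral {x..b} (\<lambda>t. (t - x) powr e * U t)"
      by (simp add: D_def algebra_simps)
  qed
qed

lemma RL_right_eq:
  "RL_right b n \<phi> x = integral {x..b} (\<lambda>t. (t - x) powr (n - 1) * \<phi> t) / Gamma n"
proof -
  have "integral {x..b} (\<lambda>t. rl_kernel n (t - x) * \<phi> t) = integral {x..b} (\<lambda>t. (t - x) powr (n - 1) * \<phi> t)"
    by (rule integral_spike[of "{x}"]) (auto simp: rl_kernel_def)
  then show ?thesis unfolding RL_right_def by simp
qed

lemma RL_right_bounded_var:
  fixes \<phi> :: "real \<Rightarrow> real"
  assumes ab: "a \<le> b" and n: "n > 0" and bv: "bounded_var \<phi> a b"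
  shows "bounded_var (RL_right b n \<phi>) a b"
proof -
  obtain M where M: "variation_le \<phi> a b M" using bv bounded_var_iff_variation_le by blast
  define V where "V = total_variation \<phi> a"
  define W where "W t = V t - \<phi> t" for t
  define I where "I f x = integral {x..b} (\<lambda>t. (t - x) powr (n - 1) * f t)" for f x
  have e: "n - 1 > -1" using n by simp
  have V_mono: "V s \<le> V t" and W_mono: "W s \<le> W t" if "a \<le> s" "s \<le> t" "t \<le> b" for s t
    using total_variation_mono[OF M that] unfolding V_def W_def by auto
  have bvV: "bounded_var V a b" and bvW: "bounded_var W a b"
    using bounded_var_mono_fun V_mono W_mono by blast+
  have "bounded_var (\<lambda>x. (1 / Gamma n) * I V x + (- (1 / Gamma n)) * I W x) a b"
    unfolding I_def
    by (intro bounded_var_lincomb bounded_var_integral_powr_mono[OF ab e]) (use V_mono W_mono in auto)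
  then show ?thesis
  proof (rule bounded_var_cong)
    fix x assume x: "x \<in> {a..b}"
    have "(\<lambda>t. (t - x) powr (n - 1) * V t) integrable_on {x..b}"
      "(\<lambda>t. (t - x) powr (n - 1) * W t) integrable_on {x..b}"
      using absolutely_integrable_powr_mult_bounded_var[of a x b "n - 1"] x e bvV bvW
        set_lebesgue_integral_eq_integral(1) by auto
    then have "I \<phi> x = I V x - I W x"
      unfolding I_def W_def by (subst integral_diff[symmetric]) (auto simp: algebra_simps)
    moreover have "RL_right b n \<phi> x = (1 / Gamma n) * I \<phi> x" unfolding RL_right_eq I_def by simp
    ultimately show "(1 / Gamma n) * I V x + (- (1 / Gamma n)) * I W x = RL_right b n \<phi> x"
      by (simp add: right_diff_distrib)
  qed
qed

definition powr_kernel_integral :: "real \<Rightarrow> real \<Rightarrow> (real \<Rightarrow> real) \<Rightarrow> real \<Rightarrow> real" where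
  "powr_kernel_integral a e f x = integral {a..x} (\<lambda>t. (x - t) powr e * f t)"

lemma integral_rl_kernel_eq_powr_kernel_integral:
  "integral {a..x} (\<lambda>t. rl_kernel n (x - t) * f t) = powr_kernel_integral a (n - 1) f x"
  unfolding powr_kernel_integral_def by (rule integral_spike[of "{x}"]) (auto simp: rl_kernel_def)

lemma absolutely_integrable_powr_upper_minus_mult:
  fixes f :: "real \<Rightarrow> real"
  assumes "a \<le> x" "e > -1" "f \<in> borel_measurable (lebesgue_on {a..x})"
    "\<And>t. t \<in> {a..x} \<Longrightarrow> \<bar>f t\<bar> \<le> B"
  shows "(\<lambda>t. (x - t) powr e * f t) absolutely_integrable_on {a..x}"
  using assms by (intro absolutely_integrable_mult_bounded_measurable absolutely_integrable_powr_upper_minus)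

lemma powr_kernel_integral_bound:
  fixes f :: "real \<Rightarrow> real"
  assumes ax: "a \<le> x" and e: "e > -1" and fm: "f \<in> borel_measurable (lebesgue_on {a..x})"
    and fb: "\<And>t. t \<in> {a..x} \<Longrightarrow> \<bar>f t\<bar> \<le> B"
  shows "\<bar>powr_kernel_integral a e f x\<bar> \<le> B * ((x - a) powr (e + 1) / (e + 1))"
proof -
  have k: "((\<lambda>t. B * (x - t) powr e) has_integral B * ((x - a) powr (e + 1) / (e + 1))) {a..x}"
    using has_integral_mult_right[OF has_integral_powr_upper_minus[OF ax e]] by simp
  have "norm (powr_kernel_integral a e f x) \<le> integral {a..x} (\<lambda>t. B * (x - t) powr e)"
    unfolding powr_kernel_integral_def
  proof (rule integral_norm_bound_integral)
    show "(\<lambda>t. (x - t) powr e * f t) integrable_on {a..x}"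
      using absolutely_integrable_powr_upper_minus_mult[OF assms] set_lebesgue_integral_eq_integral(1) by blast
    show "(\<lambda>t. B * (x - t) powr e) integrable_on {a..x}" using k by blast
    show "norm ((x - t) powr e * f t) \<le> B * (x - t) powr e" if "t \<in> {a..x}" for t
      using fb[OF that] by (simp add: abs_mult mult.commute mult_right_mono)
  qed
  then show ?thesis using integral_unique[OF k] by simp
qed

lemma powr_kernel_integral_diff:
  fixes f1 f2 :: "real \<Rightarrow> real"
  assumes "a \<le> x" "e > -1"
    and "f1 \<in> borel_measurable (lebesgue_on {a..x})" "\<And>t. t \<in> {a..x} \<Longrightarrow> \<bar>f1 t\<bar> \<le> B1"
    and "f2 \<in> borel_measurable (lebesgue_on {a..x})" "\<And>t. t \<in> {a..x} \<Longrightarrow> \<bar>f2 t\<bar> \<le> B2"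
  shows "powr_kernel_integral a e f1 x - powr_kernel_integral a e f2 x
           = powr_kernel_integral a e (\<lambda>t. f1 t - f2 t) x"
  using integral_diff[OF
      absolutely_integrable_powr_upper_minus_mult[OF assms(1-4), THEN set_lebesgue_integral_eq_integral(1)]
      absolutely_integrable_powr_upper_minus_mult[OF assms(1,2,5,6), THEN set_lebesgue_integral_eq_integral(1)]]
  unfolding powr_kernel_integral_def by (simp add: right_diff_distrib)

lemma has_integral_powr_kernel_integral:
  fixes v :: "real \<Rightarrow> real"
  assumes ax: "a \<le> x" and e: "e > -1"
    and vm: "(\<lambda>t. indicator {a..x} t * v t) \<in> borel_measurable borel"
    and vi: "v absolutely_integrable_on {a..x}"
  shows "(powr_kernel_integral a e v has_integral
            integral {a..x} (\<lambda>t. v t * ((x - t) powr (e + 1) / (e + 1)))) {a..x}"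
proof -
  have "((\<lambda>s. 1 * integral {a..s} (\<lambda>t. (s - t) powr e * v t)) has_integral
           integral {a..x} (\<lambda>t. v t * integral {t..x} (\<lambda>s. (s - t) powr e * 1))) {a..x}"
    by (rule has_integral_triangle_swap(1)[OF ax e _ _ vm vi, of _ 1]) auto
  moreover have "integral {a..x} (\<lambda>t. v t * integral {t..x} (\<lambda>s. (s - t) powr e * 1))
      = integral {a..x} (\<lambda>t. v t * ((x - t) powr (e + 1) / (e + 1)))"
  proof (rule integral_cong)
    fix t assume "t \<in> {a..x}"
    then show "v t * integral {t..x} (\<lambda>s. (s - t) powr e * 1) = v t * ((x - t) powr (e + 1) / (e + 1))"
      using integral_unique[OF has_integral_powr_minus_lower[of t x e]] e by simp
  qed
  ultimately show ?thesis unfolding powr_kernel_integral_def[abs_def] by simp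
qed

lemma continuous_on_primitive:
  fixes G g :: "real \<Rightarrow> real"
  assumes "g integrable_on {a..b}"
    and "\<And>s t. a \<le> s \<Longrightarrow> s \<le> t \<Longrightarrow> t \<le> b \<Longrightarrow> G t - G s = integral {s..t} g"
  shows "continuous_on {a..b} G"
proof -
  have "continuous_on {a..b} (\<lambda>x. G a + integral {a..x} g)"
    using indefinite_integral_continuous_1[OF assms(1)] by (intro continuous_intros)
  then show ?thesis
  proof (rule continuous_on_eq)
    fix x assume "x \<in> {a..b}"
    then show "G a + integral {a..x} g = G x" using assms(2)[of a x] by simp
  qed
qed

lemma powr_kernel_integral_primitive:
  fixes G g :: "real \<Rightarrow> real"
  assumes ax: "a \<le> x" and n: "n > 0" and G0: "G a = 0"
    and gi: "g absolutely_integrable_on {a..x}"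
    and Gg: "\<And>s t. a \<le> s \<Longrightarrow> s \<le> t \<Longrightarrow> t \<le> x \<Longrightarrow> G t - G s = integral {s..t} g"
  shows "powr_kernel_integral a (n - 1) G x = integral {a..x} (\<lambda>t. (x - t) powr n / n * g t)"
proof -
  have e: "n - 1 > -1" using n by simp
  have Gc: "continuous_on {a..x} G"
    using continuous_on_primitive[OF set_lebesgue_integral_eq_integral(1)[OF gi] Gg] by blast
  define w where "w t = - ((x - t) powr n / n)" for t
  have k: "integral {s..x} (\<lambda>r. (x - r) powr (n - 1)) = (x - s) powr n / n" if "s \<le> x" for s
    using integral_unique[OF has_integral_powr_upper_minus[OF that e]] by simp
  have w: "w t - w s = integral {s..t} (\<lambda>r. (x - r) powr (n - 1))" if "a \<le> s" "s \<le> t" "t \<le> x" for s t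
  proof -
    have "integral {s..t} (\<lambda>r. (x - r) powr (n - 1)) + integral {t..x} (\<lambda>r. (x - r) powr (n - 1))
            = integral {s..x} (\<lambda>r. (x - r) powr (n - 1))"
      using has_integral_powr_upper_minus[of s x "n - 1"] that e
      by (intro Henstock_Kurzweil_Integration.integral_combine) auto
    then show ?thesis using k[of s] k[of t] that unfolding w_def by simp
  qed
  have wc: "continuous_on {a..x} w"
    unfolding w_def using n by (intro continuous_intros continuous_on_powr') auto
  \<comment> \<open>Integrate by parts against the primitive w of the kernel, once in each direction.\<close>
  have "has_RS_integral G w a x (integral {a..x} (\<lambda>t. G t * (x - t) powr (n - 1)))"
    by (rule has_RS_integral_continuous_indefinite[OF Gc absolutely_integrable_powr_upper_minus[OF ax e] w])
  from has_RS_integral_by_parts[OF this]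
  have "has_RS_integral w G a x (G x * w x - G a * w a - integral {a..x} (\<lambda>t. G t * (x - t) powr (n - 1)))" .
  moreover have "has_RS_integral w G a x (integral {a..x} (\<lambda>t. w t * g t))"
    by (rule has_RS_integral_continuous_indefinite[OF wc gi Gg])
  ultimately have "G x * w x - G a * w a - integral {a..x} (\<lambda>t. G t * (x - t) powr (n - 1))
      = integral {a..x} (\<lambda>t. w t * g t)"
    by (rule has_RS_integral_unique[OF ax])
  moreover have "w x = 0" using n by (simp add: w_def)
  moreover have "integral {a..x} (\<lambda>t. w t * g t) = - integral {a..x} (\<lambda>t. (x - t) powr n / n * g t)"
    unfolding w_def by (subst integral_neg[symmetric]) simp_all
  ultimately show ?thesis unfolding powr_kernel_integral_def using G0 by (simp add: mult.commute)
qed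

lemma RL_left_smooth:
  fixes G g :: "real \<Rightarrow> real"
  assumes n: "1 \<le> n" and ax: "a \<le> x" and G0: "G a = 0"
    and gi: "g absolutely_integrable_on {a..x}"
    and Gg: "\<And>s t. a \<le> s \<Longrightarrow> s \<le> t \<Longrightarrow> t \<le> x \<Longrightarrow> G t - G s = integral {s..t} g"
  shows "RL_left a n G x = powr_kernel_integral a (n - 1) g x / Gamma n"
proof -
  define k where "k t = rl_kernel n (x - t)" for t
  have "continuous_on {a..x} (\<lambda>t. (x - t) powr (n - 1))" if "n \<noteq> 1"
    using that n by (intro continuous_intros continuous_on_powr') auto
  then have kc: "continuous_on {a..x} k" by (cases "n = 1") (auto simp: k_def rl_kernel_def)
  have "has_RS_integral G k a x (k x * G x - k a * G a - integral {a..x} (\<lambda>t. k t * g t))"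
    by (rule has_RS_integral_by_parts[OF has_RS_integral_continuous_indefinite[OF kc gi Gg]])
  then have "hk_pair G k a x = integral {a..x} (\<lambda>t. k t * g t)"
    unfolding hk_pair_def using RS_integral_eqI[OF ax] G0 by (simp add: mult.commute)
  also have "\<dots> = powr_kernel_integral a (n - 1) g x"
    unfolding k_def by (rule integral_rl_kernel_eq_powr_kernel_integral)
  finally show ?thesis unfolding RL_left_def k_def by simp
qed

lemma hk_pair_RL_right_smooth:
  fixes G g \<phi> :: "real \<Rightarrow> real"
  assumes ab: "a \<le> b" and n: "n > 0" and bv: "bounded_var \<phi> a b" and G0: "G a = 0"
    and gc: "continuous_on {a..b} g"
    and Gg: "\<And>s t. a \<le> s \<Longrightarrow> s \<le> t \<Longrightarrow> t \<le> b \<Longrightarrow> G t - G s = integral {s..t} g"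
  shows "hk_pair G (RL_right b n \<phi>) a b
           = integral {a..b} (\<lambda>x. \<phi> x * powr_kernel_integral a (n - 1) g x) / Gamma n"
    and "(\<lambda>x. \<phi> x * powr_kernel_integral a (n - 1) g x) integrable_on {a..b}"
proof -
  define \<psi> where "\<psi> = RL_right b n \<phi>"
  have e: "n - 1 > -1" using n by simp
  have gi: "g absolutely_integrable_on {a..b}" by (rule absolutely_integrable_continuous_real[OF gc])
  have bv\<psi>: "bounded_var \<psi> a b" unfolding \<psi>_def by (rule RL_right_bounded_var[OF ab n bv])
  have \<psi>b: "\<psi> b = 0" by (simp add: \<psi>_def RL_right_def)
  have Gc: "continuous_on {a..b} G"
    using continuous_on_primitive[OF set_lebesgue_integral_eq_integral(1)[OF gi] Gg] by blast
  obtain I where I: "has_RS_integral G \<psi> a b I" using RS_integrable_continuous[OF ab Gc bv\<psi>] by blast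
  obtain H where H: "\<And>t. t \<in> {a..b} \<Longrightarrow> \<bar>g t\<bar> \<le> H"
    using compact_imp_bounded[OF compact_continuous_image[OF gc compact_Icc]]
    unfolding bounded_iff by fastforce
  have "G b * \<psi> b - G a * \<psi> a - I = integral {a..b} (\<lambda>t. \<psi> t * g t)"
    by (rule has_RS_integral_unique[OF ab has_RS_integral_by_parts[OF I]
          has_RS_integral_bounded_var_indefinite[OF ab bv\<psi> gi H Gg]])
  then have hk: "hk_pair G \<psi> a b = integral {a..b} (\<lambda>t. \<psi> t * g t)"
    unfolding hk_pair_def RS_integral_eqI[OF ab I] using G0 \<psi>b by simp
  obtain M where M: "variation_le \<phi> a b M" using bv bounded_var_iff_variation_le by blast
  have swap: "((\<lambda>x. \<phi> x * powr_kernel_integral a (n - 1) g x) has_integral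
      integral {a..b} (\<lambda>t. g t * integral {t..b} (\<lambda>x. (x - t) powr (n - 1) * \<phi> x))) {a..b}"
    unfolding powr_kernel_integral_def
    using variation_le_bound[OF M]
    by (intro has_integral_triangle_swap(1)[OF ab e bounded_var_indicator_borel_measurable[OF bv ab] _
          continuous_on_indicator_borel_measurable[OF gc] gi])
       auto
  then show "(\<lambda>x. \<phi> x * powr_kernel_integral a (n - 1) g x) integrable_on {a..b}" by blast
  have "integral {a..b} (\<lambda>t. \<psi> t * g t)
      = integral {a..b} (\<lambda>t. g t * integral {t..b} (\<lambda>x. (x - t) powr (n - 1) * \<phi> x)) / Gamma n"
    unfolding \<psi>_def RL_right_eq by (simp add: mult.commute)
  then show "hk_pair G (RL_right b n \<phi>) a b
      = integral {a..b} (\<lambda>x. \<phi> x * powr_kernel_integral a (n - 1) g x) / Gamma n"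
    using hk integral_unique[OF swap] unfolding \<psi>_def by simp
qed

section \<open>The primitive of the left Riemann-Liouville integral\<close>

definition RL_left_primitive :: "real \<Rightarrow> real \<Rightarrow> real \<Rightarrow> (real \<Rightarrow> real) \<Rightarrow> real \<Rightarrow> real" where
  "RL_left_primitive a b n F x =
     (if x \<in> {a..b} then powr_kernel_integral a (n - 1) F x / Gamma n else 0)"

lemma RL_left_primitive_diff_bound:
  fixes F1 F2 :: "real \<Rightarrow> real"
  assumes n: "n > 0" and c1: "continuous_on {a..b} F1" and c2: "continuous_on {a..b} F2"
    and d: "\<And>t. t \<in> {a..b} \<Longrightarrow> \<bar>F1 t - F2 t\<bar> \<le> \<delta>" and x: "x \<in> {a..b}"
  shows "\<bar>RL_left_primitive a b n F1 x - RL_left_primitive a b n F2 x\<bar> \<le> \<delta> * ((b - a) powr n / n) / Gamma n"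
proof -
  have e: "n - 1 > -1" using n by simp
  have ax: "a \<le> x" "x \<le> b" using x by auto
  have m: "f \<in> borel_measurable (lebesgue_on {a..x})" if "continuous_on {a..b} f" for f :: "real \<Rightarrow> real"
    using that ax by (intro continuous_imp_measurable_on_sets_lebesgue) (auto elim: continuous_on_subset)
  have bnd: "\<exists>B. \<forall>t\<in>{a..x}. \<bar>f t\<bar> \<le> B" if "continuous_on {a..b} f" for f :: "real \<Rightarrow> real"
    using compact_imp_bounded[OF compact_continuous_image[OF that compact_Icc]] ax
    unfolding bounded_iff by fastforce
  obtain B1 B2 where B1: "\<forall>t\<in>{a..x}. \<bar>F1 t\<bar> \<le> B1" and B2: "\<forall>t\<in>{a..x}. \<bar>F2 t\<bar> \<le> B2"
    using bnd[OF c1] bnd[OF c2] by blast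
  have "powr_kernel_integral a (n - 1) F1 x - powr_kernel_integral a (n - 1) F2 x
      = powr_kernel_integral a (n - 1) (\<lambda>t. F1 t - F2 t) x"
    using B1 B2 by (intro powr_kernel_integral_diff[OF ax(1) e m[OF c1] _ m[OF c2]]) auto
  also have "\<bar>\<dots>\<bar> \<le> \<delta> * ((x - a) powr n / n)"
    using powr_kernel_integral_bound[OF ax(1) e, of "\<lambda>t. F1 t - F2 t" \<delta>] m[OF c1] m[OF c2] d ax by auto
  also have "\<dots> \<le> \<delta> * ((b - a) powr n / n)"
    using ax n d[OF x] by (intro mult_left_mono divide_right_mono powr_mono2) auto
  finally have "\<bar>powr_kernel_integral a (n - 1) F1 x - powr_kernel_integral a (n - 1) F2 x\<bar>
      / Gamma n \<le> \<delta> * ((b - a) powr n / n) / Gamma n"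
    using Gamma_real_pos[OF n] by (intro divide_right_mono) auto
  then show ?thesis
    using x Gamma_real_pos[OF n] by (simp add: RL_left_primitive_def diff_divide_distrib[symmetric] abs_divide)
qed

lemma RL_left_primitive_smooth:
  fixes G g :: "real \<Rightarrow> real"
  assumes n: "n > 0" and x: "x \<in> {a..b}" and G0: "G a = 0"
    and gc: "continuous_on {a..b} g"
    and Gg: "\<And>s t. a \<le> s \<Longrightarrow> s \<le> t \<Longrightarrow> t \<le> b \<Longrightarrow> G t - G s = integral {s..t} g"
  shows "((\<lambda>s. powr_kernel_integral a (n - 1) g s / Gamma n) has_integral RL_left_primitive a b n G x) {a..x}"
proof -
  have e: "n - 1 > -1" using n by simp
  have ax: "a \<le> x" "x \<le> b" using x by auto
  have gi: "g absolutely_integrable_on {a..x}"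
    using ax by (intro absolutely_integrable_continuous_real continuous_on_subset[OF gc]) auto
  have "(\<lambda>t. indicator {a..x} t * g t) \<in> borel_measurable borel"
    using ax by (intro continuous_on_indicator_borel_measurable continuous_on_subset[OF gc]) auto
  then have "(powr_kernel_integral a (n - 1) g has_integral
      integral {a..x} (\<lambda>t. g t * ((x - t) powr n / n))) {a..x}"
    using has_integral_powr_kernel_integral[OF ax(1) e _ gi] by simp
  also have "integral {a..x} (\<lambda>t. g t * ((x - t) powr n / n)) = powr_kernel_integral a (n - 1) G x"
    using powr_kernel_integral_primitive[of a x n G g] ax n G0 gi Gg by (simp add: mult.commute)
  finally show ?thesis
    using has_integral_divide[of _ _ "{a..x}" "Gamma n"] x by (simp add: RL_left_primitive_def)
qed

lemma continuous_on_uniform_approximation: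
  fixes F :: "real \<Rightarrow> real"
  assumes "\<And>k. continuous_on S (G k)" "\<And>k x. x \<in> S \<Longrightarrow> \<bar>G k x - F x\<bar> \<le> d k" "d \<longlonglongrightarrow> 0"
  shows "continuous_on S F"
proof (rule uniform_limit_theorem[OF _ uniform_limitI])
  show "\<forall>\<^sub>F k in sequentially. continuous_on S (G k)" using assms(1) by simp
  fix e :: real assume "e > 0"
  with assms(3) have "\<forall>\<^sub>F k in sequentially. d k < e" by (rule order_tendstoD)
  then show "\<forall>\<^sub>F k in sequentially. \<forall>x\<in>S. dist (G k x) (F x) < e"
  proof eventually_elim
    case (elim k)
    then show ?case using assms(2)[of _ k] by (auto simp: dist_real_def intro: le_less_trans)
  qed
qed simp

lemma RL_left_primitive_smooth_diff:
  fixes G g :: "real \<Rightarrow> real"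
  assumes ab: "a \<le> b" and n: "n > 0" and G0: "G a = 0" and gc: "continuous_on {a..b} g"
    and Gg: "\<And>s t. a \<le> s \<Longrightarrow> s \<le> t \<Longrightarrow> t \<le> b \<Longrightarrow> G t - G s = integral {s..t} g"
  shows "(\<lambda>s. powr_kernel_integral a (n - 1) g s / Gamma n) integrable_on {a..b}"
    and "\<And>s t. a \<le> s \<Longrightarrow> s \<le> t \<Longrightarrow> t \<le> b \<Longrightarrow>
           RL_left_primitive a b n G t - RL_left_primitive a b n G s
             = integral {s..t} (\<lambda>s. powr_kernel_integral a (n - 1) g s / Gamma n)"
proof -
  define h where "h s = powr_kernel_integral a (n - 1) g s / Gamma n" for s
  have P: "(h has_integral RL_left_primitive a b n G x) {a..x}" if "x \<in> {a..b}" for x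
    unfolding h_def by (rule RL_left_primitive_smooth[OF n that G0 gc Gg])
  show hi: "(\<lambda>s. powr_kernel_integral a (n - 1) g s / Gamma n) integrable_on {a..b}"
    using P[of b] ab unfolding h_def by auto
  fix s t assume st: "a \<le> s" "s \<le> t" "t \<le> b"
  have "integral {a..s} h + integral {s..t} h = integral {a..t} h"
    using st integrable_on_subinterval[OF hi[folded h_def]]
    by (intro Henstock_Kurzweil_Integration.integral_combine) auto
  then show "RL_left_primitive a b n G t - RL_left_primitive a b n G s
      = integral {s..t} (\<lambda>s. powr_kernel_integral a (n - 1) g s / Gamma n)"
    using integral_unique[OF P[of s]] integral_unique[OF P[of t]] st unfolding h_def by simp
qed

lemma continuous_on_RL_left_primitive:
  fixes F :: "real \<Rightarrow> real"
  assumes ab: "a \<le> b" and n: "n > 0" and Fc: "continuous_on {a..b} F" and F0: "F a = 0"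
  shows "continuous_on {a..b} (RL_left_primitive a b n F)"
proof -
  obtain G g where G0: "\<And>k. G k a = 0" and gc: "\<And>k. continuous_on UNIV (g k)"
    and Gg: "\<And>k s t. s \<le> t \<Longrightarrow> G k t - G k s = integral {s..t} (g k)"
    and GF: "\<And>k t. t \<in> {a..b} \<Longrightarrow> \<bar>G k t - F t\<bar> \<le> 2 * inverse (real (Suc k))"
    using smooth_approximations[OF Fc F0 ab] by metis
  have gc': "continuous_on {a..b} (g k)" for k using gc continuous_on_subset by blast
  have Gc: "continuous_on {a..b} (G k)" for k
    using continuous_on_primitive[OF integrable_continuous_real[OF gc'] Gg] by blast
  show ?thesis
  proof (rule continuous_on_uniform_approximation)
    show "continuous_on {a..b} (RL_left_primitive a b n (G k))" for k
      using RL_left_primitive_smooth_diff[where G="G k" and g="g k", OF ab n G0 gc'] Gg[of _ _ k]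
      by (intro continuous_on_primitive) auto
    show "\<bar>RL_left_primitive a b n (G k) x - RL_left_primitive a b n F x\<bar>
            \<le> 2 * inverse (real (Suc k)) * ((b - a) powr n / n) / Gamma n" if "x \<in> {a..b}" for k x
      by (rule RL_left_primitive_diff_bound[OF n Gc Fc GF that])
    show "(\<lambda>k. 2 * inverse (real (Suc k)) * ((b - a) powr n / n) / Gamma n) \<longlonglongrightarrow> 0"
      by (intro tendsto_mult_left_zero tendsto_divide_zero tendsto_mult_right_zero LIMSEQ_inverse_real_of_nat)
  qed
qed

lemma hk_pair_RL_left_primitive_smooth:
  fixes G g \<phi> :: "real \<Rightarrow> real"
  assumes ab: "a \<le> b" and n: "n > 0" and bv: "bounded_var \<phi> a b" and G0: "G a = 0"
    and gc: "continuous_on {a..b} g"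
    and Gg: "\<And>s t. a \<le> s \<Longrightarrow> s \<le> t \<Longrightarrow> t \<le> b \<Longrightarrow> G t - G s = integral {s..t} g"
  shows "hk_pair (RL_left_primitive a b n G) \<phi> a b
           = integral {a..b} (\<lambda>x. \<phi> x * powr_kernel_integral a (n - 1) g x) / Gamma n"
proof -
  define P where "P = RL_left_primitive a b n G"
  define h where "h s = powr_kernel_integral a (n - 1) g s / Gamma n" for s
  note P = RL_left_primitive_smooth_diff[OF ab n G0 gc Gg, folded h_def P_def]
  obtain B where B: "\<And>t. t \<in> {a..b} \<Longrightarrow> \<bar>g t\<bar> \<le> B"
    using compact_imp_bounded[OF compact_continuous_image[OF gc compact_Icc]]
    unfolding bounded_iff by fastforce
  have hb: "\<bar>h s\<bar> \<le> B * ((b - a) powr n / n) / Gamma n" if "s \<in> {a..b}" for s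
  proof -
    have "g \<in> borel_measurable (lebesgue_on {a..s})"
      using that by (intro continuous_imp_measurable_on_sets_lebesgue continuous_on_subset[OF gc]) auto
    then have "\<bar>powr_kernel_integral a (n - 1) g s\<bar> \<le> B * ((s - a) powr n / n)"
      using that B powr_kernel_integral_bound[of a s "n - 1" g B] n by auto
    also have "\<dots> \<le> B * ((b - a) powr n / n)"
      using that n B[of a] ab by (intro mult_left_mono divide_right_mono powr_mono2) auto
    finally have "\<bar>powr_kernel_integral a (n - 1) g s\<bar> / Gamma n \<le> B * ((b - a) powr n / n) / Gamma n"
      using Gamma_real_pos[OF n] by (intro divide_right_mono) auto
    then show ?thesis unfolding h_def using Gamma_real_pos[OF n] by (simp add: abs_divide)
  qed
  have "bounded (h ` {a..b})"
    unfolding bounded_iff using hb by (intro exI[of _ "B * ((b - a) powr n / n) / Gamma n"]) auto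
  then have "(\<lambda>s. h s * 1) absolutely_integrable_on {a..b}"
    by (intro absolutely_integrable_bounded_measurable_product_real integrable_imp_measurable[OF P(1)]) auto
  then have "has_RS_integral \<phi> P a b (integral {a..b} (\<lambda>t. \<phi> t * h t))"
    using has_RS_integral_bounded_var_indefinite[OF ab bv _ hb P(2)] by simp
  from has_RS_integral_by_parts[OF this]
  have "RS_integral P \<phi> a b = \<phi> b * P b - \<phi> a * P a - integral {a..b} (\<lambda>t. \<phi> t * h t)"
    by (rule RS_integral_eqI[OF ab])
  moreover have "P a = 0" by (simp add: P_def RL_left_primitive_def powr_kernel_integral_def)
  ultimately show ?thesis
    unfolding hk_pair_def P_def[symmetric] h_def by (simp add: mult.commute)
qed

lemma absolutely_integrable_borel_representative:
  fixes g :: "real \<Rightarrow> real"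
  assumes "g absolutely_integrable_on {a..b}"
  obtains g' N where "g' \<in> borel_measurable borel" "negligible N" "\<And>x. x \<in> {a..b} - N \<Longrightarrow> g' x = g x"
proof -
  have "integrable lebesgue (\<lambda>x. indicator {a..b} x *\<^sub>R g x)"
    using assms unfolding set_integrable_def by simp
  then have "(\<lambda>x. indicator {a..b} x *\<^sub>R g x) \<in> borel_measurable lebesgue"
    by (rule borel_measurable_integrable)
  then obtain g' where g': "g' \<in> borel_measurable lborel" "AE x in lborel. indicator {a..b} x *\<^sub>R g x = g' x"
    using completion_ex_borel_measurable_real by blast
  obtain N where N: "\<And>x. x \<in> space lborel - N \<Longrightarrow> indicator {a..b} x *\<^sub>R g x = g' x" "N \<in> null_sets lborel"
    by (rule AE_E3[OF g'(2)]) blast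
  have "negligible N" using N(2) negligible_iff_null_sets null_sets_completionI by blast
  moreover have "g' x = g x" if "x \<in> {a..b} - N" for x using N(1)[of x] that by simp
  moreover have "g' \<in> borel_measurable borel" using g'(1) by simp
  ultimately show ?thesis using that by blast
qed

lemma has_integral_RL_left_L1:
  fixes g :: "real \<Rightarrow> real"
  assumes n: "n > 0" and gi: "g absolutely_integrable_on {a..b}" and x: "x \<in> {a..b}"
  shows "(RL_left_L1 a n g has_integral RL_left_primitive a b n (\<lambda>y. integral {a..y} g) x) {a..x}"
proof -
  have e: "n - 1 > -1" using n by simp
  have ax: "a \<le> x" "x \<le> b" using x by auto
  obtain g' N where g'm[measurable]: "g' \<in> borel_measurable borel" and N: "negligible N"
    and g'g: "\<And>x. x \<in> {a..b} - N \<Longrightarrow> g' x = g x"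
    using absolutely_integrable_borel_representative[OF gi] by blast
  have gix: "g absolutely_integrable_on {a..x}"
    using ax by (intro absolutely_integrable_on_subinterval[OF gi]) auto
  have g'i: "g' absolutely_integrable_on {a..x}"
    by (rule absolutely_integrable_spike[OF gix N]) (use g'g ax in auto)
  have RL: "RL_left_L1 a n g s = powr_kernel_integral a (n - 1) g' s / Gamma n" if "s \<in> {a..x}" for s
  proof -
    have "integral {a..s} (\<lambda>t. rl_kernel n (s - t) * g t) = integral {a..s} (\<lambda>t. rl_kernel n (s - t) * g' t)"
      by (rule integral_spike[OF N]) (use g'g that ax in auto)
    then show ?thesis unfolding RL_left_L1_def integral_rl_kernel_eq_powr_kernel_integral by simp
  qed
  have "(powr_kernel_integral a (n - 1) g' has_integral
      integral {a..x} (\<lambda>t. g' t * ((x - t) powr n / n))) {a..x}"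
    using has_integral_powr_kernel_integral[OF ax(1) e _ g'i] by simp
  also have "integral {a..x} (\<lambda>t. g' t * ((x - t) powr n / n))
      = powr_kernel_integral a (n - 1) (\<lambda>y. integral {a..y} g) x"
  proof -
    have "integral {a..t} g - integral {a..s} g = integral {s..t} g'" if "a \<le> s" "s \<le> t" "t \<le> x" for s t
    proof -
      have "integral {a..s} g + integral {s..t} g = integral {a..t} g"
        using that integrable_on_subinterval[OF set_lebesgue_integral_eq_integral(1)[OF gix]]
        by (intro Henstock_Kurzweil_Integration.integral_combine) auto
      moreover have "integral {s..t} g = integral {s..t} g'"
        by (rule integral_spike[OF N]) (use g'g that ax in auto)
      ultimately show ?thesis by simp
    qed
    then show ?thesis
      using powr_kernel_integral_primitive[of a x n "\<lambda>y. integral {a..y} g" g'] ax n g'i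
      by (simp add: mult.commute)
  qed
  finally have "((\<lambda>s. powr_kernel_integral a (n - 1) g' s / Gamma n) has_integral
      RL_left_primitive a b n (\<lambda>y. integral {a..y} g) x) {a..x}"
    using has_integral_divide x by (simp add: RL_left_primitive_def)
  then show ?thesis using has_integral_cong[of "{a..x}" "RL_left_L1 a n g"] RL by simp
qed

lemma alex_dist_L1_le:
  assumes "a \<le> b" "\<And>x. x \<in> {a..b} \<Longrightarrow> \<bar>integral {a..x} g - F x\<bar> \<le> d"
  shows "alex_dist_L1 a b g F \<le> d"
  unfolding alex_dist_L1_def using assms by (intro cSUP_least) auto

lemma alex_dist_L1_upper:
  fixes F g :: "real \<Rightarrow> real"
  assumes "continuous_on {a..b} F" "g integrable_on {a..b}" "x \<in> {a..b}"
  shows "\<bar>integral {a..x} g - F x\<bar> \<le> alex_dist_L1 a b g F"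
proof -
  have "continuous_on {a..b} (\<lambda>x. \<bar>integral {a..x} g - F x\<bar>)"
    using indefinite_integral_continuous_1[OF assms(2)] assms(1) by (intro continuous_intros)
  then have "bdd_above ((\<lambda>x. \<bar>integral {a..x} g - F x\<bar>) ` {a..b})"
    by (intro bounded_imp_bdd_above compact_imp_bounded compact_continuous_image compact_Icc)
  then show ?thesis unfolding alex_dist_L1_def by (rule cSUP_upper[OF assms(3)])
qed

lemma alex_dist_L1_RL_left_L1_le:
  fixes F g :: "real \<Rightarrow> real"
  assumes ab: "a \<le> b" and n: "n > 0" and Fc: "continuous_on {a..b} F"
    and gi: "g absolutely_integrable_on {a..b}"
  shows "alex_dist_L1 a b (RL_left_L1 a n g) (RL_left_primitive a b n F)
           \<le> alex_dist_L1 a b g F * ((b - a) powr n / n) / Gamma n"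
proof (rule alex_dist_L1_le[OF ab])
  fix x assume x: "x \<in> {a..b}"
  have g: "g integrable_on {a..b}" using gi set_lebesgue_integral_eq_integral(1) by blast
  show "\<bar>integral {a..x} (RL_left_L1 a n g) - RL_left_primitive a b n F x\<bar>
      \<le> alex_dist_L1 a b g F * ((b - a) powr n / n) / Gamma n"
    unfolding integral_unique[OF has_integral_RL_left_L1[OF n gi x]]
    by (rule RL_left_primitive_diff_bound[OF n indefinite_integral_continuous_1[OF g] Fc
          alex_dist_L1_upper[OF Fc g] x])
qed

lemma alex_dist_L1_nonneg:
  fixes F g :: "real \<Rightarrow> real"
  assumes "a \<le> b" "continuous_on {a..b} F" "g integrable_on {a..b}"
  shows "0 \<le> alex_dist_L1 a b g F"
  using alex_dist_L1_upper[OF assms(2,3), of a] assms(1) by (auto intro: order_trans[OF abs_ge_zero])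

lemma alex_dist_L1_tendsto_imp_eq:
  fixes P1 P2 :: "real \<Rightarrow> real"
  assumes "continuous_on {a..b} P1" "continuous_on {a..b} P2" "\<And>k. h k integrable_on {a..b}"
    and "(\<lambda>k. alex_dist_L1 a b (h k) P1) \<longlonglongrightarrow> 0" "(\<lambda>k. alex_dist_L1 a b (h k) P2) \<longlonglongrightarrow> 0"
    and x: "x \<in> {a..b}"
  shows "P1 x = P2 x"
proof -
  have "\<bar>P1 x - P2 x\<bar> \<le> alex_dist_L1 a b (h k) P1 + alex_dist_L1 a b (h k) P2" for k
    using alex_dist_L1_upper[OF assms(1) assms(3)[of k] x] alex_dist_L1_upper[OF assms(2) assms(3)[of k] x]
    by linarith
  then have "\<bar>P1 x - P2 x\<bar> \<le> 0"
    using tendsto_add[OF assms(4,5)] by (intro tendsto_le[OF trivial_limit_sequentially _ tendsto_const]) auto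
  then show ?thesis by simp
qed

lemma RL_left_L1_alex_dist_tendsto:
  fixes F :: "real \<Rightarrow> real"
  assumes ab: "a \<le> b" and n: "n > 0" and Fc: "continuous_on {a..b} F" and F0: "F a = 0"
    and fs: "\<And>k. fs k absolutely_integrable_on {a..b}" "(\<lambda>k. alex_dist_L1 a b (fs k) F) \<longlonglongrightarrow> 0"
  shows "(\<lambda>k. alex_dist_L1 a b (RL_left_L1 a n (fs k)) (RL_left_primitive a b n F)) \<longlonglongrightarrow> 0"
proof (rule Lim_null_comparison)
  show "(\<lambda>k. alex_dist_L1 a b (fs k) F * ((b - a) powr n / n) / Gamma n) \<longlonglongrightarrow> 0"
    using tendsto_divide_zero[OF tendsto_mult_left_zero[OF fs(2)]] .
  have "RL_left_L1 a n (fs k) integrable_on {a..b}" for k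
    using has_integral_RL_left_L1[OF n fs(1), of b] ab by auto
  then show "\<forall>\<^sub>F k in sequentially. norm (alex_dist_L1 a b (RL_left_L1 a n (fs k)) (RL_left_primitive a b n F))
          \<le> alex_dist_L1 a b (fs k) F * ((b - a) powr n / n) / Gamma n"
    using alex_dist_L1_RL_left_L1_le[OF ab n Fc fs(1)]
      alex_dist_L1_nonneg[OF ab continuous_on_RL_left_primitive[OF ab n Fc F0]]
    by (intro always_eventually) auto
qed

lemma alex_dist_L1_derivative_tendsto:
  fixes F :: "real \<Rightarrow> real"
  assumes ab: "a \<le> b" and Fc: "continuous_on {a..b} F"
    and G0: "\<And>k. G k a = 0" and gi: "\<And>k. g k integrable_on {a..b}"
    and Gg: "\<And>k x. x \<in> {a..b} \<Longrightarrow> G k x - G k a = integral {a..x} (g k)"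
    and err: "\<And>k t. t \<in> {a..b} \<Longrightarrow> \<bar>G k t - F t\<bar> \<le> d k" and d: "d \<longlonglongrightarrow> 0"
  shows "(\<lambda>k. alex_dist_L1 a b (g k) F) \<longlonglongrightarrow> 0"
proof (rule Lim_null_comparison[OF _ d])
  have "alex_dist_L1 a b (g k) F \<le> d k" for k
  proof (rule alex_dist_L1_le[OF ab])
    fix x assume "x \<in> {a..b}"
    then show "\<bar>integral {a..x} (g k) - F x\<bar> \<le> d k" using err[of x k] Gg[of x k] G0[of k] by simp
  qed
  then show "\<forall>\<^sub>F k in sequentially. norm (alex_dist_L1 a b (g k) F) \<le> d k"
    using alex_dist_L1_nonneg[OF ab Fc gi] by (intro always_eventually) auto
qed

lemma RL_left_prim_eq:
  fixes F :: "real \<Rightarrow> real"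
  assumes ab: "a \<le> b" and n: "n > 0" and Fc: "continuous_on {a..b} F" and F0: "F a = 0"
  shows "RL_left_prim a b n F = RL_left_primitive a b n F"
  unfolding RL_left_prim_def
proof (rule the_equality)
  define P where "P = RL_left_primitive a b n F"
  have Pc: "continuous_on {a..b} P" unfolding P_def by (rule continuous_on_RL_left_primitive[OF ab n Fc F0])
  show "continuous_on {a..b} P \<and> P a = 0 \<and> (\<forall>x. x \<notin> {a..b} \<longrightarrow> P x = 0) \<and>
      (\<forall>fs. (\<forall>k. fs k absolutely_integrable_on {a..b}) \<and> (\<lambda>k. alex_dist_L1 a b (fs k) F) \<longlonglongrightarrow> 0
        \<longrightarrow> (\<lambda>k. alex_dist_L1 a b (RL_left_L1 a n (fs k)) P) \<longlonglongrightarrow> 0)"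
  proof (intro conjI allI impI)
    show "P a = 0" by (simp add: P_def RL_left_primitive_def powr_kernel_integral_def)
    show "P x = 0" if "x \<notin> {a..b}" for x using that unfolding P_def RL_left_primitive_def by argo
  qed (use Pc RL_left_L1_alex_dist_tendsto[OF ab n Fc F0] in \<open>auto simp: P_def\<close>)
  fix P' assume P': "continuous_on {a..b} P' \<and> P' a = 0 \<and> (\<forall>x. x \<notin> {a..b} \<longrightarrow> P' x = 0) \<and>
      (\<forall>fs. (\<forall>k. fs k absolutely_integrable_on {a..b}) \<and> (\<lambda>k. alex_dist_L1 a b (fs k) F) \<longlonglongrightarrow> 0
        \<longrightarrow> (\<lambda>k. alex_dist_L1 a b (RL_left_L1 a n (fs k)) P') \<longlonglongrightarrow> 0)"
  \<comment> \<open>Uniqueness is tested on the derivatives of smooth approximations of F.\<close>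
  obtain G g where G0: "\<And>k. G k a = 0" and gc: "\<And>k. continuous_on UNIV (g k)"
    and Gg: "\<And>k s t. s \<le> t \<Longrightarrow> G k t - G k s = integral {s..t} (g k)"
    and err: "\<And>k t. t \<in> {a..b} \<Longrightarrow> \<bar>G k t - F t\<bar> \<le> 2 * inverse (real (Suc k))"
    using smooth_approximations[OF Fc F0 ab] by metis
  have gi: "g k absolutely_integrable_on {a..b}" for k
    using gc continuous_on_subset by (blast intro: absolutely_integrable_continuous_real)
  have gI: "g k integrable_on {a..b}" for k using gi set_lebesgue_integral_eq_integral(1) by blast
  have d: "(\<lambda>k. 2 * inverse (real (Suc k))) \<longlonglongrightarrow> 0"
    using tendsto_mult_right_zero[OF LIMSEQ_inverse_real_of_nat] .
  have gF: "(\<lambda>k. alex_dist_L1 a b (g k) F) \<longlonglongrightarrow> 0"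
    by (rule alex_dist_L1_derivative_tendsto[where G=G, OF ab Fc G0 gI _ err d]) (use Gg in auto)
  then have lim': "(\<lambda>k. alex_dist_L1 a b (RL_left_L1 a n (g k)) P') \<longlonglongrightarrow> 0"
    using P' gi by blast
  have lim: "(\<lambda>k. alex_dist_L1 a b (RL_left_L1 a n (g k)) P) \<longlonglongrightarrow> 0"
    unfolding P_def by (rule RL_left_L1_alex_dist_tendsto[OF ab n Fc F0 gi gF])
  have "RL_left_L1 a n (g k) integrable_on {a..b}" for k
    using has_integral_RL_left_L1[OF n gi, of b] ab by auto
  then have eq: "P' x = P x" if "x \<in> {a..b}" for x
    using alex_dist_L1_tendsto_imp_eq[OF conjunct1[OF P'] Pc _ lim' lim that] by blast
  show "P' = P"
  proof
    fix x
    show "P' x = P x" using eq[of x] P' by (cases "x \<in> {a..b}") (auto simp: P_def RL_left_primitive_def)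
  qed
qed

section \<open>Passage to the limit\<close>

lemma RL_left_zero: "a \<le> x \<Longrightarrow> RL_left a n (\<lambda>t. 0) x = 0"
proof -
  assume "a \<le> x"
  moreover have "has_RS_integral (\<lambda>t. 0) g a x 0" for g
    unfolding has_RS_integral_iff RS_sum_def by (auto intro: exI[of _ 1])
  ultimately show ?thesis unfolding RL_left_def hk_pair_def using RS_integral_eqI by simp
qed

lemma RL_left_diff_bound:
  fixes F1 F2 :: "real \<Rightarrow> real"
  assumes n: "1 \<le> n" and x: "x \<in> {a..b}"
    and c1: "continuous_on {a..b} F1" and c2: "continuous_on {a..b} F2"
    and d: "\<And>t. t \<in> {a..b} \<Longrightarrow> \<bar>F1 t - F2 t\<bar> \<le> \<delta>"
  shows "\<bar>RL_left a n F1 x - RL_left a n F2 x\<bar> \<le> \<delta> * (1 + (b - a) powr (n - 1)) / Gamma n"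
proof -
  have ax: "a \<le> x" "x \<le> b" using x by auto
  have \<delta>0: "\<delta> \<ge> 0" using d[of a] ax by auto
  define k where "k t = rl_kernel n (x - t)" for t
  have kx: "k x \<ge> 0" by (simp add: k_def rl_kernel_def)
  have ka: "k a \<le> 1 + (b - a) powr (n - 1)"
    using powr_mono2[of "n - 1" "x - a" "b - a"] n ax by (auto simp: k_def rl_kernel_def)
  have "variation_le k a x (k a - k x)"
  proof (rule variation_le_antimono_fun)
    fix s t assume "a \<le> s" "s \<le> t" "t \<le> x"
    then show "k t \<le> k s" using powr_mono2[of "n - 1" "x - t" "x - s"] n by (auto simp: k_def rl_kernel_def)
  qed
  moreover have sub: "{a..x} \<subseteq> {a..b}" using ax by auto
  moreover obtain I1 I2 where I: "has_RS_integral F1 k a x I1" "has_RS_integral F2 k a x I2"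
    using RS_integrable_continuous[OF ax(1) continuous_on_subset[OF c1 sub]]
      RS_integrable_continuous[OF ax(1) continuous_on_subset[OF c2 sub]] calculation(1)
      bounded_var_iff_variation_le by blast
  ultimately have "\<bar>I1 - I2\<bar> \<le> \<delta> * (k a - k x)"
    using d by (intro has_RS_integral_diff_bound[OF ax(1)]) auto
  moreover have "\<bar>(F1 x - F2 x) * k x\<bar> \<le> \<delta> * k x"
    using d[OF x] kx by (simp add: abs_mult mult_right_mono)
  ultimately have "\<bar>(F1 x - F2 x) * k x - (I1 - I2)\<bar> \<le> \<delta> * (1 + (b - a) powr (n - 1))"
    using mult_left_mono[OF ka \<delta>0] by (simp add: algebra_simps abs_if split: if_splits)
  moreover have "RL_left a n F1 x - RL_left a n F2 x = ((F1 x - F2 x) * k x - (I1 - I2)) / Gamma n"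
    unfolding RL_left_def hk_pair_def k_def[symmetric]
    using RS_integral_eqI[OF ax(1) I(1)] RS_integral_eqI[OF ax(1) I(2)] Gamma_real_pos[of n] n
    by (simp add: diff_divide_distrib add_divide_distrib left_diff_distrib)
  ultimately show ?thesis
    using Gamma_real_pos[of n] n by (simp add: abs_divide divide_right_mono)
qed

lemma integral_RL_left_tendsto:
  fixes F \<phi> :: "real \<Rightarrow> real"
  assumes ab: "a \<le> b" and n: "1 \<le> n" and bv: "bounded_var \<phi> a b" and Fc: "continuous_on {a..b} F"
    and Gc: "\<And>k. continuous_on {a..b} (G k)"
    and err: "\<And>k t. t \<in> {a..b} \<Longrightarrow> \<bar>G k t - F t\<bar> \<le> d k" and d: "d \<longlonglongrightarrow> 0"
    and int: "\<And>k. (\<lambda>x. \<phi> x * RL_left a n (G k) x) integrable_on {a..b}"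
  shows "(\<lambda>k. integral {a..b} (\<lambda>x. \<phi> x * RL_left a n (G k) x))
           \<longlonglongrightarrow> integral {a..b} (\<lambda>x. \<phi> x * RL_left a n F x)"
proof -
  define c where "c = (1 + (b - a) powr (n - 1)) / Gamma n"
  obtain M where M: "variation_le \<phi> a b M" using bv bounded_var_iff_variation_le by blast
  obtain BF where BF: "\<And>t. t \<in> {a..b} \<Longrightarrow> \<bar>F t\<bar> \<le> BF"
    using compact_imp_bounded[OF compact_continuous_image[OF Fc compact_Icc]]
    unfolding bounded_iff by fastforce
  obtain D where D: "\<And>k. \<bar>d k\<bar> \<le> D" using BseqE[OF convergent_imp_Bseq[OF convergentI[OF d]]] by auto
  have bound: "norm (\<phi> x * RL_left a n (G k) x) \<le> (\<bar>\<phi> a\<bar> + M) * ((BF + D) * c)"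
    if x: "x \<in> {a..b}" for k x
  proof -
    have "\<bar>G k t - 0\<bar> \<le> BF + D" if "t \<in> {a..b}" for t
      using BF[OF that] err[OF that, of k] D[of k] by linarith
    then have "\<bar>RL_left a n (G k) x - RL_left a n (\<lambda>t. 0) x\<bar> \<le> (BF + D) * (1 + (b - a) powr (n - 1)) / Gamma n"
      by (rule RL_left_diff_bound[OF n x Gc continuous_on_const])
    then have "\<bar>RL_left a n (G k) x\<bar> \<le> (BF + D) * c"
      using RL_left_zero[of a x n] x by (simp add: c_def)
    then show ?thesis
      using variation_le_bound[OF M] variation_le_nonneg[OF M ab] x unfolding real_norm_def abs_mult
      by (intro mult_mono) auto
  qed
  have conv: "(\<lambda>k. \<phi> x * RL_left a n (G k) x) \<longlonglongrightarrow> \<phi> x * RL_left a n F x" if x: "x \<in> {a..b}" for x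
  proof -
    have "(\<lambda>k. RL_left a n (G k) x - RL_left a n F x) \<longlonglongrightarrow> 0"
    proof (rule Lim_null_comparison)
      have "norm (RL_left a n (G k) x - RL_left a n F x) \<le> d k * c" for k
        using RL_left_diff_bound[OF n x Gc Fc err, of k] by (simp add: c_def)
      then show "\<forall>\<^sub>F k in sequentially. norm (RL_left a n (G k) x - RL_left a n F x) \<le> d k * c"
        by (rule always_eventually[OF allI])
      show "(\<lambda>k. d k * c) \<longlonglongrightarrow> 0" by (intro tendsto_mult_left_zero d)
    qed
    then show ?thesis by (rule tendsto_mult[OF tendsto_const LIM_zero_cancel])
  qed
  show ?thesis by (rule dominated_convergence(2)[OF int integrable_const_ivl bound conv])
qed

lemma RL_right_pairing_tendsto:
  fixes F \<phi> :: "real \<Rightarrow> real" and G g :: "nat \<Rightarrow> real \<Rightarrow> real"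
  assumes ab: "a \<le> b" and n: "n > 0" and bv: "bounded_var \<phi> a b"
    and G0: "\<And>k. G k a = 0" and gc: "\<And>k. continuous_on {a..b} (g k)"
    and Gg: "\<And>k s t. a \<le> s \<Longrightarrow> s \<le> t \<Longrightarrow> t \<le> b \<Longrightarrow> G k t - G k s = integral {s..t} (g k)"
    and err: "\<And>k t. t \<in> {a..b} \<Longrightarrow> \<bar>G k t - F t\<bar> \<le> d k" and d: "d \<longlonglongrightarrow> 0"
  shows "(\<lambda>k. integral {a..b} (\<lambda>x. \<phi> x * powr_kernel_integral a (n - 1) (g k) x) / Gamma n)
           \<longlonglongrightarrow> hk_pair F (RL_right b n \<phi>) a b"
proof -
  have "(\<lambda>k. hk_pair (G k) (RL_right b n \<phi>) a b) \<longlonglongrightarrow> hk_pair F (RL_right b n \<phi>) a b"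
    using continuous_on_primitive[OF integrable_continuous_real[OF gc] Gg]
    by (intro hk_pair_tendsto[OF ab _ RL_right_bounded_var[OF ab n bv] err d])
  then show ?thesis using hk_pair_RL_right_smooth(1)[OF ab n bv G0 gc Gg] by simp
qed

lemma integral_RL_left_smooth_tendsto:
  fixes F \<phi> :: "real \<Rightarrow> real" and G g :: "nat \<Rightarrow> real \<Rightarrow> real"
  assumes ab: "a \<le> b" and n: "1 \<le> n" and bv: "bounded_var \<phi> a b"
    and Fc: "continuous_on {a..b} F"
    and G0: "\<And>k. G k a = 0" and gc: "\<And>k. continuous_on {a..b} (g k)"
    and Gg: "\<And>k s t. a \<le> s \<Longrightarrow> s \<le> t \<Longrightarrow> t \<le> b \<Longrightarrow> G k t - G k s = integral {s..t} (g k)"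
    and err: "\<And>k t. t \<in> {a..b} \<Longrightarrow> \<bar>G k t - F t\<bar> \<le> d k" and d: "d \<longlonglongrightarrow> 0"
  shows "(\<lambda>k. integral {a..b} (\<lambda>x. \<phi> x * powr_kernel_integral a (n - 1) (g k) x) / Gamma n)
           \<longlonglongrightarrow> integral {a..b} (\<lambda>x. \<phi> x * RL_left a n F x)"
proof -
  have RL: "\<phi> x * RL_left a n (G k) x = \<phi> x * powr_kernel_integral a (n - 1) (g k) x / Gamma n"
    if x: "x \<in> {a..b}" for k x
  proof -
    have ax: "a \<le> x" "x \<le> b" using x by auto
    have "g k absolutely_integrable_on {a..x}"
      using ax by (intro absolutely_integrable_continuous_real continuous_on_subset[OF gc]) auto
    then have "RL_left a n (G k) x = powr_kernel_integral a (n - 1) (g k) x / Gamma n"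
      by (rule RL_left_smooth[where G="G k", OF n ax(1) G0]) (use Gg ax in auto)
    then show ?thesis by simp
  qed
  then have L: "integral {a..b} (\<lambda>x. \<phi> x * RL_left a n (G k) x)
      = integral {a..b} (\<lambda>x. \<phi> x * powr_kernel_integral a (n - 1) (g k) x) / Gamma n" for k
    by (subst integral_divide[symmetric]) (rule integral_cong)
  have "(\<lambda>x. \<phi> x * powr_kernel_integral a (n - 1) (g k) x / Gamma n) integrable_on {a..b}" for k
    using hk_pair_RL_right_smooth(2)[OF ab _ bv G0 gc Gg, of n] n by (intro integrable_on_divide) auto
  then have "(\<lambda>x. \<phi> x * RL_left a n (G k) x) integrable_on {a..b}" for k
    by (rule integrable_eq) (use RL in auto)
  from integral_RL_left_tendsto[OF ab n bv Fc _ err d this] show ?thesis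
    unfolding L using continuous_on_primitive[OF integrable_continuous_real[OF gc] Gg] by blast
qed

lemma hk_pair_RL_left_prim_smooth_tendsto:
  fixes F \<phi> :: "real \<Rightarrow> real" and G g :: "nat \<Rightarrow> real \<Rightarrow> real"
  assumes ab: "a \<le> b" and n: "n > 0" and bv: "bounded_var \<phi> a b"
    and Fc: "continuous_on {a..b} F" and F0: "F a = 0"
    and G0: "\<And>k. G k a = 0" and gc: "\<And>k. continuous_on {a..b} (g k)"
    and Gg: "\<And>k s t. a \<le> s \<Longrightarrow> s \<le> t \<Longrightarrow> t \<le> b \<Longrightarrow> G k t - G k s = integral {s..t} (g k)"
    and err: "\<And>k t. t \<in> {a..b} \<Longrightarrow> \<bar>G k t - F t\<bar> \<le> d k" and d: "d \<longlonglongrightarrow> 0"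
  shows "(\<lambda>k. integral {a..b} (\<lambda>x. \<phi> x * powr_kernel_integral a (n - 1) (g k) x) / Gamma n)
           \<longlonglongrightarrow> hk_pair (RL_left_prim a b n F) \<phi> a b"
proof -
  have Gc: "continuous_on {a..b} (G k)" for k
    using continuous_on_primitive[OF integrable_continuous_real[OF gc] Gg] by blast
  have "(\<lambda>k. hk_pair (RL_left_primitive a b n (G k)) \<phi> a b) \<longlonglongrightarrow> hk_pair (RL_left_primitive a b n F) \<phi> a b"
  proof (rule hk_pair_tendsto[OF ab continuous_on_RL_left_primitive[OF ab n Gc G0] bv])
    show "\<bar>RL_left_primitive a b n (G k) t - RL_left_primitive a b n F t\<bar> \<le> d k * ((b - a) powr n / n) / Gamma n"
      if "t \<in> {a..b}" for k t
      by (rule RL_left_primitive_diff_bound[OF n Gc Fc err that])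
    show "(\<lambda>k. d k * ((b - a) powr n / n) / Gamma n) \<longlonglongrightarrow> 0"
      by (intro tendsto_divide_zero tendsto_mult_left_zero d)
  qed
  then show ?thesis
    using hk_pair_RL_left_primitive_smooth[OF ab n bv G0 gc Gg] RL_left_prim_eq[OF ab n Fc F0] by simp
qed

theorem theorem4p8:
  fixes a b n :: real and F \<phi> :: "real \<Rightarrow> real"
  assumes "a < b" and "0 < n"
    and "continuous_on {a..b} F" and "F a = 0"
    and "bounded_var \<phi> a b"
  shows "(if 1 \<le> n then integral {a..b} (\<lambda>x. \<phi> x * RL_left a n F x)
          else hk_pair (RL_left_prim a b n F) \<phi> a b)
         = hk_pair F (RL_right b n \<phi>) a b"
proof -
  have ab: "a \<le> b" using assms(1) by simp
  obtain G g where G0: "\<And>k. G k a = 0" and gc: "\<And>k. continuous_on UNIV (g k)"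
    and Gg: "\<And>k s t. s \<le> t \<Longrightarrow> G k t - G k s = integral {s..t} (g k)"
    and err: "\<And>k t. t \<in> {a..b} \<Longrightarrow> \<bar>G k t - F t\<bar> \<le> 2 * inverse (real (Suc k))"
    using smooth_approximations[OF assms(3,4) ab] by metis
  have gc': "continuous_on {a..b} (g k)" for k using gc continuous_on_subset by blast
  have d: "(\<lambda>k. 2 * inverse (real (Suc k))) \<longlonglongrightarrow> 0"
    using tendsto_mult_right_zero[OF LIMSEQ_inverse_real_of_nat] .
  have left: "(\<lambda>k. integral {a..b} (\<lambda>x. \<phi> x * powr_kernel_integral a (n - 1) (g k) x) / Gamma n)
      \<longlonglongrightarrow> (if 1 \<le> n then integral {a..b} (\<lambda>x. \<phi> x * RL_left a n F x)
           else hk_pair (RL_left_prim a b n F) \<phi> a b)"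
    using integral_RL_left_smooth_tendsto[OF ab _ assms(5,3) G0 gc' Gg err d]
      hk_pair_RL_left_prim_smooth_tendsto[OF ab assms(2,5,3,4) G0 gc' Gg err d] by simp
  show ?thesis
    using LIMSEQ_unique[OF left RL_right_pairing_tendsto[OF ab assms(2,5) G0 gc' Gg err d]] .
qed

end
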